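(* Let $S$ be a random matrix with a discrete distribution such that $\mathbb{P}(S=S_i) = p_i >0$, where $S_i \in \mathbb{R}^{n \times q_i}$ for $i =1,\ldots, r$. Let \[ \mathbb{S} := \begin{pmatrix} S_1^\top \otimes S_1^\top\\ \vdots \\ S_r^\top \otimes S_r^\top \end{pmatrix} \in \mathbb{R}^{\sum_{i=1}^r q_i^2 \times n}. \] Then the iterates \[ X_{k+1} = X_k + A S (S^\top A^2 S)^{\dagger} S^\top ( A - AX_kA) S (S^\top A^2 S)^\dagger S^\top A \] (with $S$ drawn independently from this distribution at each iteration and $X_0 = AWA$ for some matrix $W$) converge in the sense $\mathbb{E}[\|X_{k} - A^\dagger\|_F^2] \leq \rho^{k} \|X_{0}-A^\dagger\|_F^2$ with a rate \[ \rho := 1- \inf_{R = A Q A,\ Q \in \mathbb{R}^{n\times n},\ \|R\|_F^2 =1} \langle \mathbb{E}[ZRZ],R\rangle <1, \qquad Z := A S (S^\top A^2 S)^{\dagger} S^\top A, \] if \[ \bigcap_{i=1}^r \{R \,: \, S_i^\top ARA S_i =0\} \subset \{R\, : \, ARA =0\}. \] Equivalently, this condition holds if and only if \[ \mathrm{Null}(\mathbb{S} \, (A \otimes A))\subset \mathrm{Null}(A \otimes A). \]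
   Context: $A \in \mathbb{R}^{n\times n}$ is a symmetric matrix and $A^\dagger$ its Moore-Penrose pseudoinverse. $\otimes$ denotes the Kronecker product, $\mathrm{Null}(\cdot)$ the null space, $\langle X,Y\rangle = \mathrm{Tr}(X^\top Y)$ the Frobenius inner product and $\|\cdot\|_F$ the Frobenius norm. Condition involving $R$ is understood via vectorization $\vec{R}$ (stacking columns), using $\overrightarrow{ABC} = (C^\top\otimes A)\vec{B}$. *)

theory Defs
  imports Complex_Main "Jordan_Normal_Form.Matrix_Kernel"
begin

definition pinv :: "real mat \<Rightarrow> real mat" where
  "pinv M = (THE X. X \<in> carrier_mat (dim_col M) (dim_row M) \<and>
              M * X * M = M \<and> X * M * X = X \<and>
              transpose_mat (M * X) = M * X \<and> transpose_mat (X * M) = X * M)"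

definition mtrace :: "real mat \<Rightarrow> real" where
  "mtrace M = (\<Sum>i<dim_row M. M $$ (i, i))"

definition frob_inner :: "real mat \<Rightarrow> real mat \<Rightarrow> real" where
  "frob_inner X Y = mtrace (transpose_mat X * Y)"

definition frob_sq :: "real mat \<Rightarrow> real" where
  "frob_sq M = (\<Sum>i<dim_row M. \<Sum>j<dim_col M. (M $$ (i, j))\<^sup>2)"

definition kron :: "real mat \<Rightarrow> real mat \<Rightarrow> real mat" where
  "kron P Q = mat (dim_row P * dim_row Q) (dim_col P * dim_col Q)
     (\<lambda>(i, j). P $$ (i div dim_row Q, j div dim_col Q) * Q $$ (i mod dim_row Q, j mod dim_col Q))"

definition stack_kron :: "nat \<Rightarrow> (nat \<Rightarrow> real mat) \<Rightarrow> nat \<Rightarrow> real mat" where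
  "stack_kron n S r = foldr (\<lambda>i M. kron (transpose_mat (S i)) (transpose_mat (S i)) @\<^sub>r M)
      [1..<Suc r] (0\<^sub>m 0 (n * n))"

definition Zmat :: "real mat \<Rightarrow> real mat \<Rightarrow> real mat" where
  "Zmat A Si = A * Si * pinv (transpose_mat Si * (A * A) * Si) * transpose_mat Si * A"

definition step :: "real mat \<Rightarrow> real mat \<Rightarrow> real mat \<Rightarrow> real mat" where
  "step A Si X = X + A * Si * pinv (transpose_mat Si * (A * A) * Si) * transpose_mat Si
        * (A - A * X * A) * Si * pinv (transpose_mat Si * (A * A) * Si) * transpose_mat Si * A"

(* X_k for the sequence of drawn indices is = [i_0, ..., i_{k-1}], starting at X_0 = A W A *)
definition iterate :: "real mat \<Rightarrow> (nat \<Rightarrow> real mat) \<Rightarrow> real mat \<Rightarrow> nat list \<Rightarrow> real mat" where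
  "iterate A S W is = foldl (\<lambda>X i. step A (S i) X) (A * W * A) is"

(* E[ || X_k - A^+ ||_F^2 ] over i.i.d. draws with P(S = S_i) = p_i, i = 1..r *)
definition expected_err :: "real mat \<Rightarrow> (nat \<Rightarrow> real mat) \<Rightarrow> (nat \<Rightarrow> real) \<Rightarrow> nat
                            \<Rightarrow> real mat \<Rightarrow> nat \<Rightarrow> real" where
  "expected_err A S p r W k =
     (\<Sum>is\<in>{is. length is = k \<and> set is \<subseteq> {1..r}}.
        (\<Prod>i\<leftarrow>is. p i) * frob_sq (iterate A S W is - pinv A))"

definition EZRZ :: "nat \<Rightarrow> real mat \<Rightarrow> (nat \<Rightarrow> real mat) \<Rightarrow> (nat \<Rightarrow> real) \<Rightarrow> nat \<Rightarrow> real mat \<Rightarrow> real mat" where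
  "EZRZ n A S p r R = mat n n (\<lambda>(a, b). \<Sum>i\<in>{1..r}. p i * (Zmat A (S i) * R * Zmat A (S i)) $$ (a, b))"

definition rate :: "nat \<Rightarrow> real mat \<Rightarrow> (nat \<Rightarrow> real mat) \<Rightarrow> (nat \<Rightarrow> real) \<Rightarrow> nat \<Rightarrow> real" where
  "rate n A S p r = 1 - Inf {frob_inner (EZRZ n A S p r R) R | R.
      (\<exists>Q \<in> carrier_mat n n. R = A * Q * A) \<and> frob_sq R = 1}"

end

theory Submission
  imports Defs
begin

text \<open>
  Write \<open>E\<^sub>k = X\<^sub>k - A\<^sup>\<dagger>\<close>. One step gives \<open>E\<^sub>k\<^sub>+\<^sub>1 = E\<^sub>k - Z E\<^sub>k Z\<close>, where
  \<open>Z = A S (S\<^sup>T A\<^sup>2 S)\<^sup>\<dagger> S\<^sup>T A\<close> is the orthogonal projection onto the range of \<open>A S\<close>.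
  Hence, by Pythagoras, \<open>\<parallel>E\<^sub>k\<^sub>+\<^sub>1\<parallel>\<^sup>2 = \<parallel>E\<^sub>k\<parallel>\<^sup>2 - \<parallel>Z E\<^sub>k Z\<parallel>\<^sup>2\<close>, and averaging over \<open>S\<close>
  the error decreases by \<open>\<langle>\<bbbE>[Z E\<^sub>k Z], E\<^sub>k\<rangle>\<close>. All errors have the form \<open>A Q A\<close>, and on
  such matrices this quantity is at least \<open>(1 - \<rho>) \<parallel>E\<^sub>k\<parallel>\<^sup>2\<close>. The rate is below \<open>1\<close>
  because, by compactness, a vanishing infimum would be attained at a unit matrix \<open>R = A Q A\<close>
  with all \<open>Z\<^sub>i R Z\<^sub>i = 0\<close>, hence all \<open>S\<^sub>i\<^sup>T A R A S\<^sub>i = 0\<close>, hence \<open>A R A = 0\<close> by the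
  null space condition, and then \<open>R = A\<^sup>\<dagger> (A R A) A\<^sup>\<dagger> = 0\<close>. The Kronecker form of the
  condition is \<open>vec (S\<^sub>i\<^sup>T A R A S\<^sub>i) = (S\<^sub>i\<^sup>T \<otimes> S\<^sub>i\<^sup>T) (A \<otimes> A) vec R\<close>. The pseudoinverses
  involved are those of symmetric matrices, which exist as polynomials in the matrix.
\<close>

declare assoc_mult_mat[simp del]

lemma assoc_mult_mat_dims:
  fixes A B C :: "'a::semiring_0 mat"
  assumes "dim_col A = dim_row B" "dim_col B = dim_row C"
  shows "A * B * C = A * (B * C)"
proof -
  have "A \<in> carrier_mat (dim_row A) (dim_col A)" "B \<in> carrier_mat (dim_col A) (dim_col B)"
    "C \<in> carrier_mat (dim_col B) (dim_col C)" unfolding carrier_mat_def using assms by auto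
  thus ?thesis by (rule assoc_mult_mat)
qed

lemma transpose_mult_dims:
  fixes A B :: "'a::comm_semiring_0 mat"
  assumes "dim_col A = dim_row B"
  shows "transpose_mat (A * B) = transpose_mat B * transpose_mat A"
proof -
  have "A \<in> carrier_mat (dim_row A) (dim_col A)" "B \<in> carrier_mat (dim_col A) (dim_col B)"
    unfolding carrier_mat_def using assms by auto
  thus ?thesis by (rule transpose_mult)
qed

lemma index_mult_mat_sum:
  assumes "a < dim_row A" "b < dim_col B" "dim_col A = dim_row B"
  shows "(A * B) $$ (a, b) = (\<Sum>l<dim_row B. A $$ (a, l) * B $$ (l, b))"
  using assms by (auto simp: scalar_prod_def lessThan_atLeast0 intro!: sum.cong)

lemma transpose_mult_self_eq_zero:
  fixes X :: "real mat"
  assumes X: "X \<in> carrier_mat m k" and z: "transpose_mat X * X = 0\<^sub>m k k"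
  shows "X = 0\<^sub>m m k"
proof (rule eq_matI)
  fix i j assume i: "i < dim_row (0\<^sub>m m k)" and j: "j < dim_col (0\<^sub>m m k)"
  have "(transpose_mat X * X) $$ (j, j) = 0" using z j by simp
  hence "(\<Sum>l<m. (X $$ (l, j))\<^sup>2) = 0" using X j
    by (simp add: scalar_prod_def power2_eq_square lessThan_atLeast0)
  hence "\<forall>l\<in>{..<m}. (X $$ (l, j))\<^sup>2 = 0"
    by (subst (asm) sum_nonneg_eq_0_iff) auto
  thus "X $$ (i, j) = 0\<^sub>m m k $$ (i, j)" using i j by simp
qed (use X in auto)

subsection \<open>The pseudoinverse of a symmetric matrix\<close>

lemma sym_mult_sym_mult_eq_zero:
  fixes M :: "real mat"
  assumes M: "M \<in> carrier_mat n n" and s: "transpose_mat M = M" and Y: "Y \<in> carrier_mat n p"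
    and z: "M * (M * Y) = 0\<^sub>m n p"
  shows "M * Y = 0\<^sub>m n p"
proof (rule transpose_mult_self_eq_zero)
  show "M * Y \<in> carrier_mat n p" using M Y by auto
  have "transpose_mat (M * Y) * (M * Y) = transpose_mat Y * (M * (M * Y))"
    using M Y s by (simp add: transpose_mult_dims assoc_mult_mat_dims)
  thus "transpose_mat (M * Y) * (M * Y) = 0\<^sub>m p p" using z Y by simp
qed

lemma pow_mat_commute:
  fixes M :: "real mat"
  assumes M: "M \<in> carrier_mat n n"
  shows "M * M ^\<^sub>m k = M ^\<^sub>m k * M"
proof (induction k)
  case 0 then show ?case using M by simp
next
  case (Suc k)
  have "M * M ^\<^sub>m Suc k = (M * M ^\<^sub>m k) * M" using M by (simp add: assoc_mult_mat_dims)
  also have "\<dots> = M ^\<^sub>m Suc k * M" using Suc by simp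
  finally show ?case .
qed

lemma pow_mat_mult_pow_mat:
  fixes M :: "real mat"
  assumes M: "M \<in> carrier_mat n n"
  shows "M ^\<^sub>m j * M ^\<^sub>m k = M ^\<^sub>m (k + j)"
proof (induction k)
  case 0 then show ?case using M by simp
next
  case (Suc k)
  have "M ^\<^sub>m j * M ^\<^sub>m Suc k = (M ^\<^sub>m j * M ^\<^sub>m k) * M" using M by (simp add: assoc_mult_mat_dims)
  then show ?case using Suc by simp
qed

lemma transpose_pow_mat:
  fixes M :: "real mat"
  assumes M: "M \<in> carrier_mat n n" and s: "transpose_mat M = M"
  shows "transpose_mat (M ^\<^sub>m k) = M ^\<^sub>m k"
proof (induction k)
  case 0 then show ?case using M by simp
next
  case (Suc k)
  have "transpose_mat (M ^\<^sub>m Suc k) = transpose_mat M * transpose_mat (M ^\<^sub>m k)"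
    unfolding pow_mat.simps(2) by (rule transpose_mult_dims) (use M in auto)
  also have "\<dots> = M * M ^\<^sub>m k" using Suc s by simp
  finally show ?case using pow_mat_commute[OF M] by simp
qed

lemma sym_pow_mat_mult_eq_zero:
  fixes M :: "real mat"
  assumes M: "M \<in> carrier_mat n n" and s: "transpose_mat M = M" and Y: "Y \<in> carrier_mat n p"
  shows "M ^\<^sub>m j * Y = 0\<^sub>m n p \<Longrightarrow> M * Y = 0\<^sub>m n p"
proof (induction j rule: less_induct)
  case (less j)
  have pow_Suc: "M ^\<^sub>m Suc k * Y = M * (M ^\<^sub>m k * Y)" for k
  proof -
    have "M ^\<^sub>m Suc k = M * M ^\<^sub>m k"
      using pow_mat_commute[OF M, of k] by (simp only: pow_mat.simps(2))
    thus ?thesis by (simp only:) (rule assoc_mult_mat_dims, use M Y in auto)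
  qed
  show ?case
  proof (cases j)
    case 0 then show ?thesis using less.prems M Y by simp
  next
    case (Suc i)
    show ?thesis
    proof (cases i)
      case 0 then show ?thesis using less.prems \<open>j = Suc i\<close> M Y by simp
    next
      case (Suc l)
      have "M * (M * (M ^\<^sub>m l * Y)) = 0\<^sub>m n p"
        using less.prems unfolding \<open>j = Suc i\<close> Suc pow_Suc .
      hence "M * (M ^\<^sub>m l * Y) = 0\<^sub>m n p"
        by (rule sym_mult_sym_mult_eq_zero[OF M s, rotated]) (use M Y in auto)
      hence "M ^\<^sub>m i * Y = 0\<^sub>m n p" unfolding Suc pow_Suc .
      then show ?thesis using less.IH[of i] \<open>j = Suc i\<close> by simp
    qed
  qed
qed

definition mat_poly :: "nat \<Rightarrow> (nat \<Rightarrow> real) \<Rightarrow> nat \<Rightarrow> real mat \<Rightarrow> real mat" where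
  "mat_poly n c m M = mat n n (\<lambda>(a, b). \<Sum>k<m. c k * (M ^\<^sub>m k) $$ (a, b))"

lemma mat_poly_carrier[simp]:
  "mat_poly n c m M \<in> carrier_mat n n" "dim_row (mat_poly n c m M) = n"
  "dim_col (mat_poly n c m M) = n"
  by (auto simp: mat_poly_def)

lemma index_mult_mat_poly_left:
  assumes X: "X \<in> carrier_mat n n" and M: "M \<in> carrier_mat n n" and ab: "a < n" "b < n"
  shows "(X * mat_poly n c m M) $$ (a, b) = (\<Sum>k<m. c k * (X * M ^\<^sub>m k) $$ (a, b))"
proof -
  have "(X * mat_poly n c m M) $$ (a, b)
      = (\<Sum>l<n. X $$ (a, l) * (\<Sum>k<m. c k * (M ^\<^sub>m k) $$ (l, b)))"
    using X ab by (subst index_mult_mat_sum) (auto simp: mat_poly_def)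
  also have "\<dots> = (\<Sum>k<m. c k * (\<Sum>l<n. X $$ (a, l) * (M ^\<^sub>m k) $$ (l, b)))"
    by (simp add: sum_distrib_left sum_distrib_right mult_ac sum.swap[of _ "{..<n}"])
  also have "\<dots> = (\<Sum>k<m. c k * (X * M ^\<^sub>m k) $$ (a, b))"
    using X M ab by (intro sum.cong refl) (subst index_mult_mat_sum, auto)
  finally show ?thesis .
qed

lemma index_mult_mat_poly_right:
  assumes X: "X \<in> carrier_mat n n" and M: "M \<in> carrier_mat n n" and ab: "a < n" "b < n"
  shows "(mat_poly n c m M * X) $$ (a, b) = (\<Sum>k<m. c k * (M ^\<^sub>m k * X) $$ (a, b))"
proof -
  have "(mat_poly n c m M * X) $$ (a, b)
      = (\<Sum>l<n. (\<Sum>k<m. c k * (M ^\<^sub>m k) $$ (a, l)) * X $$ (l, b))"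
    using X ab by (subst index_mult_mat_sum) (auto simp: mat_poly_def)
  also have "\<dots> = (\<Sum>k<m. c k * (\<Sum>l<n. (M ^\<^sub>m k) $$ (a, l) * X $$ (l, b)))"
    by (simp add: sum_distrib_left sum_distrib_right mult_ac sum.swap[of _ "{..<n}"])
  also have "\<dots> = (\<Sum>k<m. c k * (M ^\<^sub>m k * X) $$ (a, b))"
    using X M ab by (intro sum.cong refl) (subst index_mult_mat_sum, auto)
  finally show ?thesis .
qed

lemma mat_poly_commute:
  assumes M: "M \<in> carrier_mat n n"
  shows "M * mat_poly n c m M = mat_poly n c m M * M"
proof (rule eq_matI)
  fix a b assume "a < dim_row (mat_poly n c m M * M)" "b < dim_col (mat_poly n c m M * M)"
  hence ab: "a < n" "b < n" using M by auto
  show "(M * mat_poly n c m M) $$ (a, b) = (mat_poly n c m M * M) $$ (a, b)"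
    unfolding index_mult_mat_poly_left[OF M M ab] index_mult_mat_poly_right[OF M M ab]
      pow_mat_commute[OF M] ..
qed (use M in auto)

lemma transpose_mat_poly:
  assumes M: "M \<in> carrier_mat n n" and s: "transpose_mat M = M"
  shows "transpose_mat (mat_poly n c m M) = mat_poly n c m M"
proof (rule eq_matI)
  fix a b assume "a < dim_row (mat_poly n c m M)" "b < dim_col (mat_poly n c m M)"
  hence ab: "a < n" "b < n" by auto
  have "(M ^\<^sub>m k) $$ (b, a) = (M ^\<^sub>m k) $$ (a, b)" for k
  proof -
    have "(M ^\<^sub>m k) $$ (b, a) = transpose_mat (M ^\<^sub>m k) $$ (a, b)" using ab M by simp
    thus ?thesis using transpose_pow_mat[OF M s] by simp
  qed
  then show "transpose_mat (mat_poly n c m M) $$ (a, b) = mat_poly n c m M $$ (a, b)"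
    using ab by (simp add: mat_poly_def)
qed auto

text \<open>The entries of \<open>M\<^sup>0, \<dots>, M\<^sup>n\<^sup>2\<close>, padded by a zero row, form a singular square
  matrix.\<close>

lemma pow_mat_linear_dependent:
  fixes M :: "real mat"
  assumes M: "M \<in> carrier_mat n n"
  shows "\<exists>v. (\<exists>k<Suc (n*n). v k \<noteq> 0) \<and>
     (\<forall>a<n. \<forall>b<n. (\<Sum>k<Suc (n*n). v k * (M ^\<^sub>m k) $$ (a, b)) = 0)"
proof -
  define N where "N = n * n"
  define c where "c i = vec (Suc N) (\<lambda>k. (M ^\<^sub>m k) $$ (i div n, i mod n))" for i
  define K where "K = mat\<^sub>r (Suc N) (Suc N) (\<lambda>i. if i = N then 0\<^sub>v (Suc N) else c i)"
  have Kc: "K \<in> carrier_mat (Suc N) (Suc N)" unfolding K_def by auto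
  have "det K = 0" unfolding K_def by (rule det_row_0) (auto simp: c_def)
  then obtain v where v: "v \<in> carrier_vec (Suc N)" "v \<noteq> 0\<^sub>v (Suc N)" "K *\<^sub>v v = 0\<^sub>v (Suc N)"
    using det_0_iff_vec_prod_zero[OF Kc] by auto
  have "\<exists>k<Suc N. v $ k \<noteq> 0"
  proof (rule ccontr)
    assume "\<not> ?thesis"
    hence "v = 0\<^sub>v (Suc N)" using v(1) by (intro eq_vecI) auto
    thus False using v(2) by simp
  qed
  moreover have "(\<Sum>k<Suc N. v $ k * (M ^\<^sub>m k) $$ (a, b)) = 0" if ab: "a < n" "b < n" for a b
  proof -
    define i where "i = a * n + b"
    have "a * n + b < (a + 1) * n" using ab by simp
    also have "\<dots> \<le> n * n" using ab by (intro mult_le_mono1) simp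
    finally have iN: "i < N" unfolding i_def N_def .
    have idm: "i div n = a" "i mod n = b" unfolding i_def using ab by auto
    have "(K *\<^sub>v v) $ i = 0" using v(3) iN by simp
    moreover have "(K *\<^sub>v v) $ i = (\<Sum>k<Suc N. (M ^\<^sub>m k) $$ (a, b) * v $ k)"
      using iN v(1) by (simp add: K_def c_def idm scalar_prod_def lessThan_atLeast0)
    ultimately show ?thesis by (simp add: mult.commute)
  qed
  ultimately show ?thesis unfolding N_def by (intro exI[of _ "\<lambda>k. v $ k"]) auto
qed

text \<open>From a dependence \<open>\<Sum>\<^sub>k\<^sub>\<ge>\<^sub>j v\<^sub>k M\<^sup>k = 0\<close> with \<open>v\<^sub>j \<noteq> 0\<close>, cancelling \<open>M\<^sup>j\<^sup>-\<^sup>1\<close>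
  is possible for symmetric \<open>M\<close>.\<close>

lemma sym_mat_poly_annihilator:
  fixes M :: "real mat"
  assumes M: "M \<in> carrier_mat n n" and s: "transpose_mat M = M"
  shows "\<exists>c L. c 0 \<noteq> 0 \<and> M * mat_poly n c (Suc L) M = 0\<^sub>m n n"
proof -
  define N where "N = n * n"
  obtain v where v1: "\<exists>k<Suc N. v k \<noteq> 0"
    and v2: "\<And>a b. a < n \<Longrightarrow> b < n \<Longrightarrow> (\<Sum>k<Suc N. v k * (M ^\<^sub>m k) $$ (a, b)) = 0"
    using pow_mat_linear_dependent[OF M] unfolding N_def by blast
  define j where "j = (LEAST k. k < Suc N \<and> v k \<noteq> 0)"
  have j: "j < Suc N" "v j \<noteq> 0" using LeastI_ex[OF v1] unfolding j_def by auto
  have vz: "v k = 0" if "k < j" for k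
    using not_less_Least[of k "\<lambda>k. k < Suc N \<and> v k \<noteq> 0"] that j unfolding j_def[symmetric] by auto
  define L where "L = N - j"
  have LL: "Suc L + j = Suc N" unfolding L_def using j by simp
  define H where "H = mat_poly n (\<lambda>t. v (t + j)) (Suc L) M"
  have Hc: "H \<in> carrier_mat n n" unfolding H_def by (rule mat_poly_carrier)
  have "M ^\<^sub>m j * H = 0\<^sub>m n n"
  proof (rule eq_matI)
    fix a b assume "a < dim_row (0\<^sub>m n n)" "b < dim_col (0\<^sub>m n n)"
    hence ab: "a < n" "b < n" by auto
    have "(M ^\<^sub>m j * H) $$ (a, b) = (\<Sum>t<Suc L. v (t + j) * (M ^\<^sub>m (t + j)) $$ (a, b))"
      unfolding H_def using M ab
      by (subst index_mult_mat_poly_left[OF _ M ab]) (auto simp: pow_mat_mult_pow_mat[OF M])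
    also have "\<dots> = (\<Sum>k\<in>{0 + j..<Suc L + j}. v k * (M ^\<^sub>m k) $$ (a, b))"
      by (subst sum.shift_bounds_nat_ivl) (simp add: lessThan_atLeast0)
    also have "\<dots> = (\<Sum>k<Suc N. v k * (M ^\<^sub>m k) $$ (a, b))"
      unfolding LL by (rule sum.mono_neutral_left) (auto simp: vz)
    also have "\<dots> = 0" using v2 ab by simp
    finally show "(M ^\<^sub>m j * H) $$ (a, b) = 0\<^sub>m n n $$ (a, b)" using ab by simp
  qed (use M Hc in auto)
  hence "M * H = 0\<^sub>m n n" by (rule sym_pow_mat_mult_eq_zero[OF M s Hc])
  thus ?thesis unfolding H_def using j(2) by (intro exI[of _ "\<lambda>t. v (t + j)"] exI[of _ L]) simp
qed

text \<open>If \<open>M (c\<^sub>0 + \<Sum>\<^sub>t c\<^sub>t\<^sub>+\<^sub>1 M\<^sup>t\<^sup>+\<^sup>1) = 0\<close>, then \<open>E = -(\<Sum>\<^sub>t c\<^sub>t\<^sub>+\<^sub>1 M\<^sup>t) / c\<^sub>0\<close>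
  satisfies \<open>M\<^sup>2 E = M\<close>.\<close>

lemma sym_mat_poly_weak_inverse:
  fixes M :: "real mat"
  assumes M: "M \<in> carrier_mat n n" and s: "transpose_mat M = M"
  shows "\<exists>E. E \<in> carrier_mat n n \<and> M * E = E * M \<and> transpose_mat E = E \<and> M * (M * E) = M"
proof -
  obtain c L where c0: "c 0 \<noteq> 0" and MH: "M * mat_poly n c (Suc L) M = 0\<^sub>m n n"
    using sym_mat_poly_annihilator[OF M s] by blast
  define E where "E = mat_poly n (\<lambda>t. (- 1 / c 0) * c (Suc t)) L M"
  have Ec: "E \<in> carrier_mat n n" unfolding E_def by simp
  have ME: "M * (M * E) = M"
  proof (rule eq_matI)
    fix a b assume "a < dim_row M" "b < dim_col M"
    hence ab: "a < n" "b < n" using M by auto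
    have pw: "M * M * M ^\<^sub>m t = M * M ^\<^sub>m Suc t" for t
      using M by (simp add: assoc_mult_mat_dims pow_mat_commute[OF M])
    have "(M * mat_poly n c (Suc L) M) $$ (a, b) = (\<Sum>t<Suc L. c t * (M * M ^\<^sub>m t) $$ (a, b))"
      using M ab by (subst index_mult_mat_poly_left[OF _ M ab]) auto
    also have "\<dots> = c 0 * M $$ (a, b) + (\<Sum>t<L. c (Suc t) * (M * M ^\<^sub>m Suc t) $$ (a, b))"
      using M by (subst sum.lessThan_Suc_shift) simp
    finally have k: "c 0 * M $$ (a, b) + (\<Sum>t<L. c (Suc t) * (M * M ^\<^sub>m Suc t) $$ (a, b)) = 0"
      using MH ab by simp
    have "(M * (M * E)) $$ (a, b) = (M * M * E) $$ (a, b)" using M Ec by (simp add: assoc_mult_mat_dims)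
    also have "\<dots> = (\<Sum>t<L. (- 1 / c 0) * c (Suc t) * (M * M ^\<^sub>m Suc t) $$ (a, b))"
      unfolding E_def using M ab by (subst index_mult_mat_poly_left[OF _ M ab]) (auto simp: pw)
    also have "\<dots> = (- 1 / c 0) * (\<Sum>t<L. c (Suc t) * (M * M ^\<^sub>m Suc t) $$ (a, b))"
      by (simp add: sum_distrib_left mult.assoc)
    also have "\<dots> = M $$ (a, b)"
    proof -
      define s where "s = (\<Sum>t<L. c (Suc t) * (M * M ^\<^sub>m Suc t) $$ (a, b))"
      have "s = - (c 0 * M $$ (a, b))" using k unfolding s_def by linarith
      thus ?thesis unfolding s_def[symmetric] using c0 by simp
    qed
    finally show "(M * (M * E)) $$ (a, b) = M $$ (a, b)" .
  qed (use M Ec in auto)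
  show ?thesis
  proof (intro exI[of _ E] conjI)
    show "M * E = E * M" unfolding E_def by (rule mat_poly_commute[OF M])
    show "transpose_mat E = E" unfolding E_def by (rule transpose_mat_poly[OF M s])
  qed (use Ec ME in auto)
qed

definition penrose :: "real mat \<Rightarrow> real mat \<Rightarrow> bool" where
  "penrose M X \<longleftrightarrow> X \<in> carrier_mat (dim_col M) (dim_row M) \<and>
     M * X * M = M \<and> X * M * X = X \<and>
     transpose_mat (M * X) = M * X \<and> transpose_mat (X * M) = X * M"

lemma penrose_unique:
  assumes M: "M \<in> carrier_mat m k" and X: "penrose M X" and Y: "penrose M Y"
  shows "X = Y"
proof -
  have Xc: "X \<in> carrier_mat k m" and Yc: "Y \<in> carrier_mat k m"
    using X Y M unfolding penrose_def by auto
  have d: "dim_row M = m" "dim_col M = k" "dim_row X = k" "dim_col X = m"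
    "dim_row Y = k" "dim_col Y = m"
    using M Xc Yc by auto
  have x: "M * X * M = M" "X * M * X = X" "transpose_mat (M * X) = M * X"
    "transpose_mat (X * M) = X * M"
    using X unfolding penrose_def by auto
  have y: "M * Y * M = M" "Y * M * Y = Y" "transpose_mat (M * Y) = M * Y"
    "transpose_mat (Y * M) = Y * M"
    using Y unfolding penrose_def by auto
  have MtMY: "transpose_mat M = transpose_mat M * (M * Y)"
  proof -
    have "transpose_mat M = transpose_mat (M * Y * M)" using y by simp
    also have "\<dots> = transpose_mat M * transpose_mat (M * Y)"
      by (rule transpose_mult_dims) (simp add: d)
    finally show ?thesis using y by simp
  qed
  have XMMt: "transpose_mat M = (X * M) * transpose_mat M"
  proof -
    have "transpose_mat M = transpose_mat (M * (X * M))" using x by (simp add: assoc_mult_mat_dims d)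
    also have "\<dots> = transpose_mat (X * M) * transpose_mat M"
      by (rule transpose_mult_dims) (simp add: d)
    finally show ?thesis using x by simp
  qed
  have "X = X * (M * X)" using x by (simp add: assoc_mult_mat_dims d)
  also have "\<dots> = X * (transpose_mat X * transpose_mat M)"
    using x by (simp add: transpose_mult_dims d)
  also have "\<dots> = X * (transpose_mat X * (transpose_mat M * (M * Y)))" by (subst (1) MtMY) (rule refl)
  also have "\<dots> = X * (transpose_mat X * transpose_mat M) * (M * Y)"
    by (simp add: assoc_mult_mat_dims d)
  also have "X * (transpose_mat X * transpose_mat M) = X"
    using x by (simp add: assoc_mult_mat_dims[symmetric] transpose_mult_dims[symmetric] d)
  finally have X_eq: "X = X * (M * Y)" .
  have "Y = (Y * M) * Y" using y by (simp add: assoc_mult_mat_dims d)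
  also have "\<dots> = (transpose_mat M * transpose_mat Y) * Y"
    using y by (simp add: transpose_mult_dims d)
  also have "\<dots> = ((X * M) * transpose_mat M * transpose_mat Y) * Y" by (subst (1) XMMt) (rule refl)
  also have "\<dots> = (X * M) * ((transpose_mat M * transpose_mat Y) * Y)"
    by (simp add: assoc_mult_mat_dims d)
  also have "(transpose_mat M * transpose_mat Y) * Y = Y"
    using y by (simp add: transpose_mult_dims[symmetric] d)
  finally have Y_eq: "Y = X * M * Y" .
  show ?thesis using X_eq Y_eq by (simp add: assoc_mult_mat_dims d)
qed

lemma pinv_eqI:
  assumes "M \<in> carrier_mat m k" "penrose M X"
  shows "pinv M = X"
  unfolding pinv_def penrose_def[symmetric]
  using penrose_unique[OF assms(1) _ assms(2)] assms(2) by blast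

text \<open>With \<open>E\<close> a symmetric polynomial in \<open>M\<close> such that \<open>M\<^sup>2 E = M\<close>, the matrix
  \<open>E M E\<close> satisfies the Penrose equations.\<close>

lemma pinv_sym:
  fixes M :: "real mat"
  assumes M: "M \<in> carrier_mat n n" and s: "transpose_mat M = M"
  shows "penrose M (pinv M)" "pinv M \<in> carrier_mat n n" "transpose_mat (pinv M) = pinv M"
    "M * pinv M = pinv M * M"
proof -
  obtain E where Ec: "E \<in> carrier_mat n n" and EM: "M * E = E * M" and Es: "transpose_mat E = E"
    and r3: "M * (M * E) = M" using sym_mat_poly_weak_inverse[OF M s] by blast
  have d: "dim_row M = n" "dim_col M = n" "dim_row E = n" "dim_col E = n" using M Ec by auto
  have r1: "E * M = M * E" using EM by simp
  have r2: "E * (M * Z) = M * (E * Z)" if "dim_row Z = n" for Z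
  proof -
    have "E * (M * Z) = (E * M) * Z" using that by (simp add: assoc_mult_mat_dims d)
    also have "\<dots> = (M * E) * Z" using r1 by simp
    also have "\<dots> = M * (E * Z)" using that by (simp add: assoc_mult_mat_dims d)
    finally show ?thesis .
  qed
  have r4: "M * (M * (E * Z)) = M * Z" if "dim_row Z = n" for Z
  proof -
    have "M * (M * (E * Z)) = (M * (M * E)) * Z" using that by (simp add: assoc_mult_mat_dims d)
    also have "\<dots> = M * Z" using r3 by simp
    finally show ?thesis .
  qed
  define X where "X = E * (M * E)"
  have Xc: "X \<in> carrier_mat n n" unfolding X_def using M Ec by simp
  have dX: "dim_row X = n" "dim_col X = n" using Xc by auto
  have MX: "M * X = M * E" unfolding X_def by (simp add: r2 r4 d)
  have XM: "X * M = M * E" unfolding X_def by (simp add: assoc_mult_mat_dims r1 r3 d)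
  have tME: "transpose_mat (M * E) = M * E" using s Es r1 by (simp add: transpose_mult_dims d)
  have p1: "M * X * M = M" by (simp add: assoc_mult_mat_dims d dX XM r3)
  have p2: "X * M * X = X" using XM unfolding X_def by (simp add: assoc_mult_mat_dims r1 r2 r4 d)
  have penX: "penrose M X" unfolding penrose_def using Xc p1 p2 MX XM tME d by simp
  have tX: "transpose_mat X = X"
  proof -
    have "transpose_mat X = transpose_mat (M * E) * transpose_mat E"
      unfolding X_def by (rule transpose_mult_dims) (simp add: d)
    also have "\<dots> = (M * E) * E" using tME Es by simp
    also have "\<dots> = X" unfolding X_def by (simp add: assoc_mult_mat_dims d r2)
    finally show ?thesis .
  qed
  have "pinv M = X" by (rule pinv_eqI[OF M penX])
  thus "penrose M (pinv M)" "pinv M \<in> carrier_mat n n" "transpose_mat (pinv M) = pinv M"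
    "M * pinv M = pinv M * M"
    using penX Xc tX MX XM by simp_all
qed

subsection \<open>Orthogonal projections onto column spaces\<close>

definition proj_mat :: "real mat \<Rightarrow> real mat" where
  "proj_mat B = B * pinv (transpose_mat B * B) * transpose_mat B"

text \<open>\<open>W = B G\<^sup>\<dagger> G - B\<close> with \<open>G = B\<^sup>T B\<close> satisfies \<open>W\<^sup>T W = 0\<close>.\<close>

lemma mult_pinv_gram:
  fixes B :: "real mat"
  assumes B: "B \<in> carrier_mat n q"
  shows "B * (pinv (transpose_mat B * B) * (transpose_mat B * B)) = B"
proof -
  define U where "U = transpose_mat B"
  define G where "G = U * B"
  define N where "N = pinv G"
  have Uc: "U \<in> carrier_mat q n" and Gc: "G \<in> carrier_mat q q"
    unfolding U_def G_def using B by auto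
  have d: "dim_row B = n" "dim_col B = q" "dim_row U = q" "dim_col U = n"
    "dim_row G = q" "dim_col G = q"
    using B Uc Gc by auto
  have TU: "transpose_mat U = B" unfolding U_def by simp
  have Gs: "transpose_mat G = G" unfolding G_def U_def using B by (simp add: transpose_mult_dims)
  have Np: "penrose G N" "N \<in> carrier_mat q q" "transpose_mat N = N"
    using pinv_sym[OF Gc Gs] unfolding N_def by auto
  have dN: "dim_row N = q" "dim_col N = q" using Np by auto
  have GNG: "G * (N * G) = G" and NGN: "N * (G * N) = N"
    using Np(1) unfolding penrose_def by (simp_all add: assoc_mult_mat_dims d dN)
  define W where "W = B * (N * G) - B"
  have Wc: "W \<in> carrier_mat n q" unfolding W_def using B Np Gc by auto
  have TNG: "transpose_mat (N * G) = G * N" using Np Gs by (simp add: transpose_mult_dims d dN)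
  have TW: "transpose_mat W = G * (N * U) - U"
    unfolding W_def using B Np Gc
    by (subst transpose_minus[of _ n q])
      (auto simp: transpose_mult_dims d dN U_def[symmetric] TNG assoc_mult_mat_dims)
  have "transpose_mat W * W = (G * (N * U) - U) * (B * (N * G) - B)" using TW W_def by simp
  also have "\<dots> = (G * (N * U) * (B * (N * G)) - G * (N * U) * B) - (U * (B * (N * G)) - U * B)"
  proof -
    have c1: "G * (N * U) \<in> carrier_mat q n" "B * (N * G) \<in> carrier_mat n q"
      "B * (N * G) - B \<in> carrier_mat n q" using B Np Gc Uc by auto
    show ?thesis
      unfolding minus_mult_distrib_mat[OF c1(1) Uc c1(3)]
        mult_minus_distrib_mat[OF c1(1) c1(2) B] mult_minus_distrib_mat[OF Uc c1(2) B] ..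
  qed
  also have "G * (N * U) * (B * (N * G)) = G"
  proof -
    have "G * (N * U) * (B * (N * G)) = G * (N * ((U * B) * (N * G)))"
      by (simp add: assoc_mult_mat_dims d dN)
    thus ?thesis unfolding G_def[symmetric] using GNG NGN by (simp add: assoc_mult_mat_dims d dN)
  qed
  also have "G * (N * U) * B = G" using GNG by (simp add: assoc_mult_mat_dims d dN G_def[symmetric])
  also have "U * (B * (N * G)) = G"
    using GNG by (simp add: assoc_mult_mat_dims[symmetric] d dN G_def[symmetric])
  also have "U * B = G" by (simp add: G_def)
  finally have "transpose_mat W * W = (G - G) - (G - G)" .
  also have "\<dots> = 0\<^sub>m q q" using Gc by (intro eq_matI) auto
  finally have W0: "W = 0\<^sub>m n q" using transpose_mult_self_eq_zero[OF Wc] by simp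
  have "B * (N * G) = B"
  proof (rule eq_matI)
    fix a b assume "a < dim_row B" "b < dim_col B"
    hence ab: "a < n" "b < q" using d by auto
    show "(B * (N * G)) $$ (a, b) = B $$ (a, b)"
      using arg_cong[OF W0, of "\<lambda>W. W $$ (a, b)"] ab unfolding W_def using B Np Gc by simp
  qed (use B Np Gc in auto)
  thus ?thesis unfolding N_def G_def U_def .
qed

lemma pinv_gram_carrier:
  fixes B :: "real mat"
  assumes B: "B \<in> carrier_mat n q"
  shows "pinv (transpose_mat B * B) \<in> carrier_mat q q"
  by (rule pinv_sym(2)) (use B in \<open>auto simp: transpose_mult_dims\<close>)

lemma transpose_pinv_gram:
  fixes B :: "real mat"
  assumes B: "B \<in> carrier_mat n q"
  shows "transpose_mat (pinv (transpose_mat B * B)) = pinv (transpose_mat B * B)"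
  by (rule pinv_sym(3)) (use B in \<open>auto simp: transpose_mult_dims\<close>)

lemma proj_mat_carrier:
  assumes B: "B \<in> carrier_mat n q"
  shows "proj_mat B \<in> carrier_mat n n"
  unfolding proj_mat_def using B pinv_gram_carrier[OF B] by auto

lemma transpose_proj_mat:
  assumes B: "B \<in> carrier_mat n q"
  shows "transpose_mat (proj_mat B) = proj_mat B"
  unfolding proj_mat_def using B pinv_gram_carrier[OF B] transpose_pinv_gram[OF B]
  by (simp add: transpose_mult_dims assoc_mult_mat_dims)

lemma proj_mat_mult_self:
  assumes B: "B \<in> carrier_mat n q"
  shows "proj_mat B * B = B"
proof -
  have "proj_mat B * B = B * (pinv (transpose_mat B * B) * (transpose_mat B * B))"
    unfolding proj_mat_def using B pinv_gram_carrier[OF B] by (simp add: assoc_mult_mat_dims)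
  thus ?thesis using mult_pinv_gram[OF B] by simp
qed

lemma transpose_mult_proj_mat:
  assumes B: "B \<in> carrier_mat n q"
  shows "transpose_mat B * proj_mat B = transpose_mat B"
  using arg_cong[OF proj_mat_mult_self[OF B], of transpose_mat] proj_mat_carrier[OF B] B
  by (simp add: transpose_mult_dims transpose_proj_mat)

lemma proj_mat_idem:
  assumes B: "B \<in> carrier_mat n q"
  shows "proj_mat B * proj_mat B = proj_mat B"
proof -
  have "proj_mat B * proj_mat B = (proj_mat B * B) * pinv (transpose_mat B * B) * transpose_mat B"
    unfolding proj_mat_def using B pinv_gram_carrier[OF B] by (simp add: assoc_mult_mat_dims)
  thus ?thesis unfolding proj_mat_mult_self[OF B] by (simp add: proj_mat_def)
qed

lemma Zmat_gram:
  fixes A Si :: "real mat"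
  assumes A: "A \<in> carrier_mat n n" and As: "transpose_mat A = A" and S: "Si \<in> carrier_mat n q"
  shows "transpose_mat Si * (A * A) * Si = transpose_mat (A * Si) * (A * Si)"
proof -
  have "transpose_mat (A * Si) = transpose_mat Si * A"
    using transpose_mult[OF A S] As by simp
  moreover have "transpose_mat Si * (A * A) * Si = transpose_mat Si * A * (A * Si)"
    using A S by (simp add: assoc_mult_mat_dims)
  ultimately show ?thesis by simp
qed

lemma Zmat_eq_proj_mat:
  assumes A: "A \<in> carrier_mat n n" and As: "transpose_mat A = A" and S: "Si \<in> carrier_mat n q"
  shows "Zmat A Si = proj_mat (A * Si)"
proof -
  have "A * Si \<in> carrier_mat n q" using A S by auto
  note N = pinv_gram_carrier[OF this]
  have T: "transpose_mat (A * Si) = transpose_mat Si * A"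
    using transpose_mult[OF A S] As by simp
  show ?thesis unfolding Zmat_def proj_mat_def Zmat_gram[OF A As S]
    using A S N by (simp add: T assoc_mult_mat_dims)
qed

lemma Zmat_sandwich:
  assumes A: "A \<in> carrier_mat n n" and As: "transpose_mat A = A" and S: "Si \<in> carrier_mat n q"
  obtains Y where "Y \<in> carrier_mat n n" "Zmat A Si = A * Y * A"
proof -
  define N where "N = pinv (transpose_mat Si * (A * A) * Si)"
  have "A * Si \<in> carrier_mat n q" using A S by auto
  hence Nc: "N \<in> carrier_mat q q"
    unfolding N_def Zmat_gram[OF A As S] by (rule pinv_gram_carrier)
  have "Zmat A Si = A * (Si * N * transpose_mat Si) * A"
    unfolding Zmat_def N_def[symmetric] using A S Nc by (simp add: assoc_mult_mat_dims)
  moreover have "Si * N * transpose_mat Si \<in> carrier_mat n n" using S Nc by auto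
  ultimately show ?thesis using that by blast
qed

definition frob_dot :: "nat \<Rightarrow> real mat \<Rightarrow> real mat \<Rightarrow> real" where
  "frob_dot n X Y = (\<Sum>a<n. \<Sum>b<n. X $$ (a, b) * Y $$ (a, b))"

lemma frob_dot_commute: "frob_dot n X Y = frob_dot n Y X"
  unfolding frob_dot_def by (simp add: mult.commute)

lemma frob_dot_self_nonneg: "frob_dot n X X \<ge> 0"
  unfolding frob_dot_def by (intro sum_nonneg) auto

lemma frob_sq_eq_frob_dot: "X \<in> carrier_mat n n \<Longrightarrow> frob_sq X = frob_dot n X X"
  unfolding frob_dot_def frob_sq_def by (simp add: power2_eq_square)

lemma frob_inner_eq_frob_dot:
  assumes "X \<in> carrier_mat n n" "Y \<in> carrier_mat n n"
  shows "frob_inner X Y = frob_dot n X Y"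
proof -
  have "frob_inner X Y = (\<Sum>b<n. \<Sum>a<n. X $$ (a, b) * Y $$ (a, b))"
    unfolding frob_inner_def mtrace_def using assms
    by (auto simp: scalar_prod_def lessThan_atLeast0 intro!: sum.cong)
  thus ?thesis unfolding frob_dot_def by (rule trans) (rule sum.swap)
qed

lemma frob_dot_mult_left:
  assumes P: "P \<in> carrier_mat n n" and X: "X \<in> carrier_mat n n" and Y: "Y \<in> carrier_mat n n"
  shows "frob_dot n (P * X) Y = frob_dot n X (transpose_mat P * Y)"
proof -
  have "frob_dot n (P * X) Y = (\<Sum>a<n. \<Sum>b<n. \<Sum>c<n. P $$ (a, c) * X $$ (c, b) * Y $$ (a, b))"
    unfolding frob_dot_def using P X
    by (intro sum.cong refl) (subst index_mult_mat_sum, auto simp: sum_distrib_right)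
  also have "\<dots> = (\<Sum>c<n. \<Sum>b<n. \<Sum>a<n. P $$ (a, c) * X $$ (c, b) * Y $$ (a, b))"
    by (subst sum.swap, subst (2) sum.swap, rule sum.cong[OF refl], rule sum.swap)
  also have "\<dots> = frob_dot n X (transpose_mat P * Y)"
    unfolding frob_dot_def using P Y
    by (intro sum.cong refl) (subst index_mult_mat_sum, auto simp: sum_distrib_left mult_ac)
  finally show ?thesis .
qed

lemma frob_dot_mult_right:
  assumes P: "P \<in> carrier_mat n n" and X: "X \<in> carrier_mat n n" and Y: "Y \<in> carrier_mat n n"
  shows "frob_dot n (X * P) Y = frob_dot n X (Y * transpose_mat P)"
proof -
  have "frob_dot n (X * P) Y = (\<Sum>a<n. \<Sum>b<n. \<Sum>c<n. X $$ (a, c) * P $$ (c, b) * Y $$ (a, b))"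
    unfolding frob_dot_def using P X
    by (intro sum.cong refl) (subst index_mult_mat_sum, auto simp: sum_distrib_right)
  also have "\<dots> = (\<Sum>a<n. \<Sum>c<n. \<Sum>b<n. X $$ (a, c) * P $$ (c, b) * Y $$ (a, b))"
    by (rule sum.cong[OF refl], rule sum.swap)
  also have "\<dots> = frob_dot n X (Y * transpose_mat P)"
    unfolding frob_dot_def using P Y
    by (intro sum.cong refl) (subst index_mult_mat_sum, auto simp: sum_distrib_left mult_ac)
  finally show ?thesis .
qed

lemma frob_dot_diff_self:
  assumes "X \<in> carrier_mat n n" "Y \<in> carrier_mat n n"
  shows "frob_dot n (X - Y) (X - Y) = frob_dot n X X - 2 * frob_dot n X Y + frob_dot n Y Y"
proof -
  have "frob_dot n (X - Y) (X - Y) = (\<Sum>a<n. \<Sum>b<n. X $$ (a, b) * X $$ (a, b)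
      - 2 * (X $$ (a, b) * Y $$ (a, b)) + Y $$ (a, b) * Y $$ (a, b))"
    unfolding frob_dot_def using assms by (intro sum.cong refl) (auto simp: algebra_simps)
  thus ?thesis unfolding frob_dot_def by (simp add: sum.distrib sum_subtractf sum_distrib_left)
qed

lemma frob_dot_smult_self:
  "X \<in> carrier_mat n n \<Longrightarrow> frob_dot n (c \<cdot>\<^sub>m X) (c \<cdot>\<^sub>m X) = c\<^sup>2 * frob_dot n X X"
  unfolding frob_dot_def by (simp add: sum_distrib_left power2_eq_square mult_ac)

lemma frob_dot_self_eq_0:
  assumes X: "X \<in> carrier_mat n n" and z: "frob_dot n X X = 0"
  shows "X = 0\<^sub>m n n"
proof (rule eq_matI)
  fix a b assume "a < dim_row (0\<^sub>m n n)" "b < dim_col (0\<^sub>m n n)"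
  hence ab: "a < n" "b < n" by auto
  have "\<forall>a\<in>{..<n}. (\<Sum>b<n. X $$ (a, b) * X $$ (a, b)) = 0"
    using z unfolding frob_dot_def by (subst (asm) sum_nonneg_eq_0_iff) (auto intro!: sum_nonneg)
  hence "\<forall>b\<in>{..<n}. X $$ (a, b) * X $$ (a, b) = 0" using ab
    by (subst sum_nonneg_eq_0_iff[symmetric]) auto
  thus "X $$ (a, b) = 0\<^sub>m n n $$ (a, b)" using ab by simp
qed (use X in auto)

lemma index_sq_le_frob_dot:
  assumes "a < n" "b < n"
  shows "(X $$ (a, b))\<^sup>2 \<le> frob_dot n X X"
proof -
  have "(X $$ (a, b))\<^sup>2 \<le> (\<Sum>b'<n. X $$ (a, b') * X $$ (a, b'))"
    using assms by (subst power2_eq_square, intro member_le_sum) auto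
  also have "\<dots> \<le> frob_dot n X X" unfolding frob_dot_def using assms
    by (intro member_le_sum[of a _ "\<lambda>a. \<Sum>b'<n. X $$ (a, b') * X $$ (a, b')"])
      (auto intro!: sum_nonneg)
  finally show ?thesis .
qed

lemma frob_dot_proj_sandwich:
  assumes Z: "Z \<in> carrier_mat n n" and Zs: "transpose_mat Z = Z" and Zi: "Z * Z = Z"
    and E: "E \<in> carrier_mat n n"
  shows "frob_dot n E (Z * E * Z) = frob_dot n (Z * E * Z) (Z * E * Z)"
    and "frob_dot n (E - Z * E * Z) (E - Z * E * Z)
      = frob_dot n E E - frob_dot n (Z * E * Z) (Z * E * Z)"
proof -
  have dZ: "dim_row Z = n" "dim_col Z = n" "dim_row E = n" "dim_col E = n" using Z E by auto
  have "frob_dot n (Z * E * Z) (Z * E * Z) = frob_dot n (Z * (E * Z)) (Z * E * Z)"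
    by (simp add: assoc_mult_mat_dims dZ)
  also have "\<dots> = frob_dot n (E * Z) (Z * (Z * E * Z))"
    by (subst frob_dot_mult_left[OF Z]) (use Z E Zs in auto)
  also have "\<dots> = frob_dot n E (Z * (Z * E * Z) * Z)"
    by (subst frob_dot_mult_right[OF Z]) (use Z E Zs in auto)
  also have "Z * (Z * E * Z) * Z = Z * E * Z"
  proof -
    have "Z * (Z * E * Z) * Z = (Z * Z) * E * (Z * Z)" by (simp add: assoc_mult_mat_dims dZ)
    thus ?thesis using Zi by simp
  qed
  finally show 1: "frob_dot n E (Z * E * Z) = frob_dot n (Z * E * Z) (Z * E * Z)" by simp
  show "frob_dot n (E - Z * E * Z) (E - Z * E * Z)
      = frob_dot n E E - frob_dot n (Z * E * Z) (Z * E * Z)"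
    using Z E by (subst frob_dot_diff_self) (auto simp: 1)
qed

subsection \<open>One step of the iteration\<close>

lemma Zmat_props:
  assumes A: "A \<in> carrier_mat n n" and As: "transpose_mat A = A" and S: "Si \<in> carrier_mat n q"
  shows "Zmat A Si \<in> carrier_mat n n" "transpose_mat (Zmat A Si) = Zmat A Si"
    "Zmat A Si * Zmat A Si = Zmat A Si"
    "transpose_mat Si * A * Zmat A Si = transpose_mat Si * A"
proof -
  have B: "A * Si \<in> carrier_mat n q" using A S by auto
  have T: "transpose_mat (A * Si) = transpose_mat Si * A"
    using transpose_mult[OF A S] As by simp
  show "Zmat A Si \<in> carrier_mat n n" "transpose_mat (Zmat A Si) = Zmat A Si"
    "Zmat A Si * Zmat A Si = Zmat A Si" "transpose_mat Si * A * Zmat A Si = transpose_mat Si * A"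
    unfolding Zmat_eq_proj_mat[OF A As S]
    using proj_mat_carrier[OF B] transpose_proj_mat[OF B] proj_mat_idem[OF B]
      transpose_mult_proj_mat[OF B] by (simp_all add: T)
qed

lemma step_carrier:
  assumes A: "A \<in> carrier_mat n n" and As: "transpose_mat A = A" and S: "Si \<in> carrier_mat n q"
    and X: "X \<in> carrier_mat n n"
  shows "step A Si X \<in> carrier_mat n n"
proof -
  have "A * Si \<in> carrier_mat n q" using A S by auto
  hence "pinv (transpose_mat Si * (A * A) * Si) \<in> carrier_mat q q"
    unfolding Zmat_gram[OF A As S] by (rule pinv_gram_carrier)
  thus ?thesis unfolding step_def using A S X by auto
qed

lemma step_minus_pinv:
  assumes A: "A \<in> carrier_mat n n" and As: "transpose_mat A = A" and S: "Si \<in> carrier_mat n q"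
    and X: "X \<in> carrier_mat n n"
  shows "step A Si X - pinv A = (X - pinv A) - Zmat A Si * (X - pinv A) * Zmat A Si"
proof -
  define N where "N = pinv (transpose_mat Si * (A * A) * Si)"
  have "A * Si \<in> carrier_mat n q" using A S by auto
  hence Nc: "N \<in> carrier_mat q q"
    unfolding N_def Zmat_gram[OF A As S] by (rule pinv_gram_carrier)
  define Ap where "Ap = pinv A"
  have Apc: "Ap \<in> carrier_mat n n" and AAA: "A * Ap * A = A"
    using pinv_sym(1,2)[OF A As] unfolding Ap_def penrose_def by auto
  have d: "dim_row A = n" "dim_col A = n" "dim_row Si = n" "dim_col Si = q" "dim_row N = q"
    "dim_col N = q" "dim_row X = n" "dim_col X = n" "dim_row Ap = n" "dim_col Ap = n"
    using A S Nc X Apc by auto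
  define L where "L = A * Si * N * transpose_mat Si"
  define Rr where "Rr = Si * N * transpose_mat Si * A"
  define E where "E = X - Ap"
  define Z where "Z = Zmat A Si"
  have Lc: "L \<in> carrier_mat n n" and Rc: "Rr \<in> carrier_mat n n" and Ec: "E \<in> carrier_mat n n"
    unfolding L_def Rr_def E_def using A S Nc X Apc by auto
  have dd: "dim_row L = n" "dim_col L = n" "dim_row Rr = n" "dim_col Rr = n" "dim_row E = n"
    "dim_col E = n"
    using Lc Rc Ec by auto
  have st: "step A Si X = X + L * ((A - A * X * A) * Rr)"
    unfolding step_def N_def[symmetric] L_def Rr_def by (simp add: assoc_mult_mat_dims d)
  have AEA: "A * E * A = A * X * A - A"
  proof -
    have "A * E * A = (A * X - A * Ap) * A" unfolding E_def
      by (subst mult_minus_distrib_mat[OF A X Apc]) simp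
    also have "\<dots> = A * X * A - A * Ap * A"
      by (rule minus_mult_distrib_mat[of _ n n]) (use A X Apc in auto)
    finally show ?thesis using AAA by simp
  qed
  have ZEZ: "Z * E * Z = L * ((A * E * A) * Rr)"
    unfolding Z_def Zmat_def N_def[symmetric] L_def Rr_def by (simp add: assoc_mult_mat_dims d dd)
  have key: "L * ((A - A * X * A) * Rr) = - (Z * E * Z)"
  proof -
    have "A - A * X * A = - (A * E * A)" unfolding AEA
      by (rule eq_matI) (use A X in auto)
    thus ?thesis unfolding ZEZ by (simp add: d dd)
  qed
  have Zc: "Z \<in> carrier_mat n n" unfolding Z_def by (rule Zmat_props(1)[OF A As S])
  define K where "K = Z * E * Z"
  have Kc: "K \<in> carrier_mat n n" unfolding K_def using Zc Ec by auto
  have Ei: "E $$ (i, j) = X $$ (i, j) - Ap $$ (i, j)" if "i < n" "j < n" for i j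
    unfolding E_def using that X Apc by simp
  have "X + - K - Ap = E - K"
    by (rule eq_matI) (use X Apc Ec Kc Ei in auto)
  thus ?thesis unfolding st key Ap_def[symmetric] Z_def[symmetric] K_def[symmetric] E_def[symmetric] .
qed

subsection \<open>The errors stay in the range of \<open>Q \<mapsto> A Q A\<close>\<close>

definition sandwich_space :: "nat \<Rightarrow> real mat \<Rightarrow> real mat set" where
  "sandwich_space n A = {A * Q * A | Q. Q \<in> carrier_mat n n}"

lemma sandwich_spaceI: "Q \<in> carrier_mat n n \<Longrightarrow> A * Q * A \<in> sandwich_space n A"
  unfolding sandwich_space_def by blast

lemma sandwich_space_carrier:
  "A \<in> carrier_mat n n \<Longrightarrow> R \<in> sandwich_space n A \<Longrightarrow> R \<in> carrier_mat n n"
  unfolding sandwich_space_def by auto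

lemma sandwich_space_diff:
  assumes A: "A \<in> carrier_mat n n"
    and X: "X \<in> sandwich_space n A" and Y: "Y \<in> sandwich_space n A"
  shows "X - Y \<in> sandwich_space n A"
proof -
  obtain P Q where P: "P \<in> carrier_mat n n" "X = A * P * A" and Q: "Q \<in> carrier_mat n n" "Y = A * Q * A"
    using X Y unfolding sandwich_space_def by blast
  have "A * (P - Q) * A = (A * P - A * Q) * A" by (subst mult_minus_distrib_mat[OF A P(1) Q(1)]) simp
  also have "\<dots> = A * P * A - A * Q * A"
    by (rule minus_mult_distrib_mat[of _ n n]) (use A P Q in auto)
  moreover have "P - Q \<in> carrier_mat n n" using P Q by auto
  ultimately show ?thesis using sandwich_spaceI[of "P - Q" n A] P Q by simp
qed

lemma sandwich_space_smult:
  assumes A: "A \<in> carrier_mat n n" and R: "R \<in> sandwich_space n A"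
  shows "c \<cdot>\<^sub>m R \<in> sandwich_space n A"
proof -
  obtain Q where Q: "Q \<in> carrier_mat n n" "R = A * Q * A"
    using R unfolding sandwich_space_def by blast
  have "c \<cdot>\<^sub>m R = A * (c \<cdot>\<^sub>m Q) * A"
    using A Q by (simp add: mult_smult_distrib[of _ n n] mult_smult_assoc_mat[of _ n n])
  thus ?thesis using sandwich_spaceI[of "c \<cdot>\<^sub>m Q" n A] Q by simp
qed

lemma sandwich_mult_sandwich_space:
  assumes A: "A \<in> carrier_mat n n" and Y: "Y \<in> carrier_mat n n" and R: "R \<in> carrier_mat n n"
  shows "(A * Y * A) * R * (A * Y * A) \<in> sandwich_space n A"
proof -
  have d: "dim_row A = n" "dim_col A = n" "dim_row Y = n" "dim_col Y = n" "dim_row R = n"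
    "dim_col R = n"
    using A Y R by auto
  have "(A * Y * A) * R * (A * Y * A) = A * (Y * A * R * A * Y) * A"
    by (simp add: assoc_mult_mat_dims d)
  moreover have "Y * A * R * A * Y \<in> carrier_mat n n" using A Y R by auto
  ultimately show ?thesis using sandwich_spaceI[of "Y * A * R * A * Y" n A] by simp
qed

text \<open>For symmetric \<open>A\<close> the Penrose equations give \<open>A\<^sup>\<dagger> = A (A\<^sup>\<dagger>)\<^sup>3 A\<close>.\<close>

lemma pinv_sym_in_sandwich_space:
  assumes A: "A \<in> carrier_mat n n" and As: "transpose_mat A = A"
  shows "pinv A \<in> sandwich_space n A"
proof -
  define Ap where "Ap = pinv A"
  have Ap: "penrose A Ap" "Ap \<in> carrier_mat n n" "A * Ap = Ap * A"
    using pinv_sym[OF A As] unfolding Ap_def by auto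
  have d: "dim_row A = n" "dim_col A = n" "dim_row Ap = n" "dim_col Ap = n" using A Ap by auto
  have p2: "Ap * (A * Ap) = Ap" using Ap(1) unfolding penrose_def by (simp add: assoc_mult_mat_dims d)
  have "A * (Ap * (Ap * Ap)) * A = (A * Ap) * Ap * (Ap * A)" by (simp add: assoc_mult_mat_dims d)
  also have "\<dots> = (Ap * A) * Ap * (A * Ap)" using Ap(3) by simp
  also have "\<dots> = Ap * (A * Ap)" using p2 by (simp add: assoc_mult_mat_dims d)
  also have "\<dots> = Ap" by (rule p2)
  finally show ?thesis unfolding Ap_def[symmetric] using sandwich_spaceI[of "Ap * (Ap * Ap)" n A] Ap
    by auto
qed

lemma self_in_sandwich_space:
  assumes A: "A \<in> carrier_mat n n" and As: "transpose_mat A = A"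
  shows "A \<in> sandwich_space n A"
  using sandwich_spaceI[OF pinv_sym(2)[OF A As], of A] pinv_sym(1)[OF A As]
  unfolding penrose_def by simp

lemma sandwich_space_fixed:
  assumes A: "A \<in> carrier_mat n n" and As: "transpose_mat A = A" and R: "R \<in> sandwich_space n A"
  shows "(A * pinv A) * R * (pinv A * A) = R"
proof -
  define Ap where "Ap = pinv A"
  have Apc: "Ap \<in> carrier_mat n n" and AAA: "A * Ap * A = A"
    using pinv_sym(1,2)[OF A As] unfolding Ap_def penrose_def by auto
  obtain Q where Q: "Q \<in> carrier_mat n n" "R = A * Q * A"
    using R unfolding sandwich_space_def by blast
  have d: "dim_row A = n" "dim_col A = n" "dim_row Ap = n" "dim_col Ap = n" "dim_row Q = n"
    "dim_col Q = n"
    using A Apc Q by auto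
  have "(A * Ap) * (A * Q * A) * (Ap * A) = (A * Ap * A) * Q * (A * Ap * A)"
    by (simp add: assoc_mult_mat_dims d)
  thus ?thesis using Q AAA unfolding Ap_def by simp
qed

lemma iterate_minus_pinv_in_sandwich_space:
  assumes A: "A \<in> carrier_mat n n" and As: "transpose_mat A = A" and W: "W \<in> carrier_mat n n"
    and S: "\<forall>i\<in>{1..r}. S i \<in> carrier_mat n (q i)"
  shows "set is \<subseteq> {1..r} \<Longrightarrow>
    iterate A S W is \<in> carrier_mat n n \<and> iterate A S W is - pinv A \<in> sandwich_space n A"
proof (induction "is" rule: rev_induct)
  case Nil
  have "A * W * A - pinv A \<in> sandwich_space n A"
    using sandwich_space_diff[OF A sandwich_spaceI[OF W] pinv_sym_in_sandwich_space[OF A As]] .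
  then show ?case using A W unfolding iterate_def by auto
next
  case (snoc i "is")
  hence Si: "S i \<in> carrier_mat n (q i)" and X: "iterate A S W is \<in> carrier_mat n n"
    and E: "iterate A S W is - pinv A \<in> sandwich_space n A" using S by auto
  obtain Y where Y: "Y \<in> carrier_mat n n" "Zmat A (S i) = A * Y * A"
    using Zmat_sandwich[OF A As Si] .
  have Ec: "iterate A S W is - pinv A \<in> carrier_mat n n" by (rule sandwich_space_carrier[OF A E])
  have "step A (S i) (iterate A S W is) - pinv A \<in> sandwich_space n A"
    unfolding step_minus_pinv[OF A As Si X] Y(2)
    by (rule sandwich_space_diff[OF A E sandwich_mult_sandwich_space[OF A Y(1) Ec]])
  then show ?case using step_carrier[OF A As Si X] unfolding iterate_def by simp
qed

subsection \<open>Expected decrease of the error\<close>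

lemma sum_lists_length_Suc:
  assumes I: "finite I"
  shows "(\<Sum>xs\<in>{xs. length xs = Suc k \<and> set xs \<subseteq> I}. f xs) =
         (\<Sum>xs\<in>{xs. length xs = k \<and> set xs \<subseteq> I}. \<Sum>i\<in>I. f (xs @ [i]))"
proof -
  let ?L = "{xs. length xs = k \<and> set xs \<subseteq> I}"
  have "{xs. length xs = Suc k \<and> set xs \<subseteq> I} = (\<lambda>(xs, i). xs @ [i]) ` (?L \<times> I)"
  proof
    show "{xs. length xs = Suc k \<and> set xs \<subseteq> I} \<subseteq> (\<lambda>(xs, i). xs @ [i]) ` (?L \<times> I)"
    proof
      fix xs assume xs: "xs \<in> {xs. length xs = Suc k \<and> set xs \<subseteq> I}"
      hence ne: "xs \<noteq> []" by auto
      have "xs = butlast xs @ [last xs]" using ne by simp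
      moreover have "(butlast xs, last xs) \<in> ?L \<times> I" using xs ne
        by (auto simp: length_butlast dest: in_set_butlastD)
      ultimately show "xs \<in> (\<lambda>(xs, i). xs @ [i]) ` (?L \<times> I)" by force
    qed
  qed auto
  moreover have "inj_on (\<lambda>(xs, i). xs @ [i]) (?L \<times> I)" by (auto simp: inj_on_def)
  ultimately show ?thesis by (simp add: sum.reindex sum.cartesian_product split_def)
qed

locale sketching =
  fixes n r :: nat and A :: "real mat" and S :: "nat \<Rightarrow> real mat"
    and q :: "nat \<Rightarrow> nat" and p :: "nat \<Rightarrow> real"
  assumes A_carrier: "A \<in> carrier_mat n n"
    and A_sym: "transpose_mat A = A"
    and S_carrier: "\<forall>i\<in>{1..r}. S i \<in> carrier_mat n (q i)"
    and p_pos: "\<forall>i\<in>{1..r}. p i > 0"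
    and p_sum: "(\<Sum>i\<in>{1..r}. p i) = 1"
begin

text \<open>\<open>\<bbbE> \<parallel>Z R Z\<parallel>\<^sub>F\<^sup>2\<close>, which equals \<open>\<langle>\<bbbE>[Z R Z], R\<rangle>\<close> because \<open>Z\<close> is an orthogonal
  projection.\<close>

definition expected_sandwich_sq :: "real mat \<Rightarrow> real" where
  "expected_sandwich_sq R = (\<Sum>i\<in>{1..r}. p i *
     frob_dot n (Zmat A (S i) * R * Zmat A (S i)) (Zmat A (S i) * R * Zmat A (S i)))"

definition rate_set :: "real set" where
  "rate_set = {frob_inner (EZRZ n A S p r R) R | R.
      (\<exists>Q \<in> carrier_mat n n. R = A * Q * A) \<and> frob_sq R = 1}"

lemma rate_eq: "rate n A S p r = 1 - Inf rate_set"
  unfolding rate_def rate_set_def ..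

lemma p_nonneg: "i \<in> {1..r} \<Longrightarrow> p i \<ge> 0"
  using p_pos by (auto intro: less_imp_le)

lemmas Zmat_S = Zmat_props[OF A_carrier A_sym bspec[OF S_carrier]]

lemma expected_sandwich_sq_nonneg: "expected_sandwich_sq R \<ge> 0"
  unfolding expected_sandwich_sq_def
  by (intro sum_nonneg mult_nonneg_nonneg frob_dot_self_nonneg p_nonneg)

lemma frob_inner_EZRZ:
  assumes R: "R \<in> carrier_mat n n"
  shows "frob_inner (EZRZ n A S p r R) R = expected_sandwich_sq R"
proof -
  let ?K = "\<lambda>i. Zmat A (S i) * R * Zmat A (S i)"
  have "frob_inner (EZRZ n A S p r R) R = frob_dot n (EZRZ n A S p r R) R"
    by (rule frob_inner_eq_frob_dot) (auto simp: EZRZ_def R)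
  also have "\<dots> = (\<Sum>a<n. \<Sum>b<n. \<Sum>i\<in>{1..r}. p i * (?K i $$ (a, b) * R $$ (a, b)))"
    unfolding frob_dot_def EZRZ_def
    by (intro sum.cong refl) (simp add: sum_distrib_right mult.assoc)
  also have "\<dots> = (\<Sum>a<n. \<Sum>i\<in>{1..r}. \<Sum>b<n. p i * (?K i $$ (a, b) * R $$ (a, b)))"
    by (rule sum.cong[OF refl], rule sum.swap)
  also have "\<dots> = (\<Sum>i\<in>{1..r}. p i * frob_dot n (?K i) R)"
    unfolding frob_dot_def sum_distrib_left by (rule sum.swap)
  also have "\<dots> = expected_sandwich_sq R"
    unfolding expected_sandwich_sq_def
    using frob_dot_proj_sandwich(1)[OF Zmat_S(1-3) R] by (simp add: frob_dot_commute)
  finally show ?thesis .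
qed

lemma expected_sandwich_sq_le:
  assumes R: "R \<in> carrier_mat n n"
  shows "expected_sandwich_sq R \<le> frob_dot n R R"
proof -
  have "expected_sandwich_sq R \<le> (\<Sum>i\<in>{1..r}. p i * frob_dot n R R)"
    unfolding expected_sandwich_sq_def
  proof (intro sum_mono mult_left_mono p_nonneg)
    fix i assume i: "i \<in> {1..r}"
    show "frob_dot n (Zmat A (S i) * R * Zmat A (S i)) (Zmat A (S i) * R * Zmat A (S i))
      \<le> frob_dot n R R"
      using frob_dot_proj_sandwich(2)[OF Zmat_S(1-3)[OF i] R]
        frob_dot_self_nonneg[of n "R - Zmat A (S i) * R * Zmat A (S i)"] by simp
  qed
  also have "\<dots> = frob_dot n R R" using p_sum by (simp add: sum_distrib_right[symmetric])
  finally show ?thesis .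
qed

lemma expected_sandwich_sq_smult:
  assumes R: "R \<in> carrier_mat n n"
  shows "expected_sandwich_sq (c \<cdot>\<^sub>m R) = c\<^sup>2 * expected_sandwich_sq R"
  unfolding expected_sandwich_sq_def sum_distrib_left
proof (intro sum.cong refl)
  fix i assume i: "i \<in> {1..r}"
  have Z: "Zmat A (S i) \<in> carrier_mat n n" by (rule Zmat_S(1)[OF i])
  have "Zmat A (S i) * (c \<cdot>\<^sub>m R) * Zmat A (S i) = c \<cdot>\<^sub>m (Zmat A (S i) * R * Zmat A (S i))"
    using Z R by (simp add: mult_smult_distrib[of _ n n] mult_smult_assoc_mat[of _ n n])
  moreover have "Zmat A (S i) * R * Zmat A (S i) \<in> carrier_mat n n" using Z R by auto
  ultimately show "p i * frob_dot n (Zmat A (S i) * (c \<cdot>\<^sub>m R) * Zmat A (S i))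
      (Zmat A (S i) * (c \<cdot>\<^sub>m R) * Zmat A (S i))
    = c\<^sup>2 * (p i * frob_dot n (Zmat A (S i) * R * Zmat A (S i)) (Zmat A (S i) * R * Zmat A (S i)))"
    by (simp add: frob_dot_smult_self)
qed

lemma expected_step_error:
  assumes X: "X \<in> carrier_mat n n"
  shows "(\<Sum>i\<in>{1..r}. p i * frob_dot n (step A (S i) X - pinv A) (step A (S i) X - pinv A))
     = frob_dot n (X - pinv A) (X - pinv A) - expected_sandwich_sq (X - pinv A)"
proof -
  have E: "X - pinv A \<in> carrier_mat n n" using X pinv_sym(2)[OF A_carrier A_sym] by auto
  have "(\<Sum>i\<in>{1..r}. p i * frob_dot n (step A (S i) X - pinv A) (step A (S i) X - pinv A))
    = (\<Sum>i\<in>{1..r}. p i * frob_dot n (X - pinv A) (X - pinv A) -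
        p i * frob_dot n (Zmat A (S i) * (X - pinv A) * Zmat A (S i))
          (Zmat A (S i) * (X - pinv A) * Zmat A (S i)))"
  proof (intro sum.cong refl)
    fix i assume i: "i \<in> {1..r}"
    have Si: "S i \<in> carrier_mat n (q i)" using S_carrier i by auto
    show "p i * frob_dot n (step A (S i) X - pinv A) (step A (S i) X - pinv A)
      = p i * frob_dot n (X - pinv A) (X - pinv A) -
        p i * frob_dot n (Zmat A (S i) * (X - pinv A) * Zmat A (S i))
          (Zmat A (S i) * (X - pinv A) * Zmat A (S i))"
      unfolding step_minus_pinv[OF A_carrier A_sym Si X]
        frob_dot_proj_sandwich(2)[OF Zmat_S(1-3)[OF i] E]
      by (simp add: algebra_simps)
  qed
  also have "\<dots> = frob_dot n (X - pinv A) (X - pinv A) - expected_sandwich_sq (X - pinv A)"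
    unfolding expected_sandwich_sq_def sum_subtractf sum_distrib_right[symmetric] p_sum by simp
  finally show ?thesis .
qed

lemma expected_err_Suc:
  assumes W: "W \<in> carrier_mat n n"
  shows "expected_err A S p r W (Suc k) =
    (\<Sum>is\<in>{is. length is = k \<and> set is \<subseteq> {1..r}}. (\<Prod>i\<leftarrow>is. p i) *
      (frob_dot n (iterate A S W is - pinv A) (iterate A S W is - pinv A)
        - expected_sandwich_sq (iterate A S W is - pinv A)))"
  unfolding expected_err_def sum_lists_length_Suc[OF finite_atLeastAtMost]
proof (intro sum.cong refl)
  fix "is" assume "is": "is \<in> {is. length is = k \<and> set is \<subseteq> {1..r}}"
  let ?X = "iterate A S W is"
  have X: "?X \<in> carrier_mat n n"
    using iterate_minus_pinv_in_sandwich_space[OF A_carrier A_sym W S_carrier] "is" by auto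
  have sq: "frob_sq (iterate A S W (is @ [i]) - pinv A)
      = frob_dot n (step A (S i) ?X - pinv A) (step A (S i) ?X - pinv A)" if i: "i \<in> {1..r}" for i
  proof -
    have "step A (S i) ?X - pinv A \<in> carrier_mat n n"
      using step_carrier[OF A_carrier A_sym _ X] S_carrier i pinv_sym(2)[OF A_carrier A_sym]
      by auto
    thus ?thesis unfolding iterate_def by (simp add: frob_sq_eq_frob_dot)
  qed
  have "(\<Sum>i\<in>{1..r}. (\<Prod>i\<leftarrow>is @ [i]. p i) * frob_sq (iterate A S W (is @ [i]) - pinv A))
    = (\<Prod>i\<leftarrow>is. p i) *
      (\<Sum>i\<in>{1..r}. p i * frob_dot n (step A (S i) ?X - pinv A) (step A (S i) ?X - pinv A))"
    unfolding sum_distrib_left by (intro sum.cong refl) (simp add: sq mult.assoc)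
  then show "(\<Sum>i\<in>{1..r}. (\<Prod>i\<leftarrow>is @ [i]. p i) * frob_sq (iterate A S W (is @ [i]) - pinv A))
    = (\<Prod>i\<leftarrow>is. p i) * (frob_dot n (?X - pinv A) (?X - pinv A) - expected_sandwich_sq (?X - pinv A))"
    unfolding expected_step_error[OF X] .
qed

lemma rate_set_eq: "rate_set = expected_sandwich_sq ` {R \<in> sandwich_space n A. frob_dot n R R = 1}"
proof -
  have eqs: "frob_inner (EZRZ n A S p r R) R = expected_sandwich_sq R" "frob_sq R = frob_dot n R R"
    if "R \<in> sandwich_space n A" for R
    using sandwich_space_carrier[OF A_carrier that] by (simp_all add: frob_inner_EZRZ frob_sq_eq_frob_dot)
  show ?thesis
  proof (intro equalityI subsetI)
    fix x assume "x \<in> rate_set"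
    then obtain R where R: "R \<in> sandwich_space n A" "frob_sq R = 1"
      "x = frob_inner (EZRZ n A S p r R) R"
      unfolding rate_set_def sandwich_space_def by blast
    thus "x \<in> expected_sandwich_sq ` {R \<in> sandwich_space n A. frob_dot n R R = 1}"
      using eqs[OF R(1)] by auto
  next
    fix x assume "x \<in> expected_sandwich_sq ` {R \<in> sandwich_space n A. frob_dot n R R = 1}"
    then obtain R where R: "R \<in> sandwich_space n A" "frob_dot n R R = 1" "x = expected_sandwich_sq R"
      by blast
    show "x \<in> rate_set" unfolding rate_set_def mem_Collect_eq
      by (intro exI[of _ R] conjI) (use R eqs[OF R(1)] in \<open>auto simp: sandwich_space_def\<close>)
  qed
qed

lemma rate_set_bdd_below: "bdd_below rate_set"
  unfolding rate_set_eq by (rule bdd_belowI[of _ 0]) (auto intro: expected_sandwich_sq_nonneg)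

lemma Inf_rate_set_le:
  "R \<in> sandwich_space n A \<Longrightarrow> frob_dot n R R = 1 \<Longrightarrow> Inf rate_set \<le> expected_sandwich_sq R"
  by (rule cInf_lower[OF _ rate_set_bdd_below]) (auto simp: rate_set_eq)

lemma Inf_rate_set_mult_le:
  assumes R: "R \<in> sandwich_space n A"
  shows "Inf rate_set * frob_dot n R R \<le> expected_sandwich_sq R"
proof (cases "frob_dot n R R = 0")
  case True then show ?thesis using expected_sandwich_sq_nonneg by simp
next
  case False
  have Rc: "R \<in> carrier_mat n n" by (rule sandwich_space_carrier[OF A_carrier R])
  have pos: "frob_dot n R R > 0" using False frob_dot_self_nonneg[of n R] by linarith
  define c where "c = 1 / sqrt (frob_dot n R R)"
  have c2: "c\<^sup>2 * frob_dot n R R = 1" unfolding c_def using pos by (simp add: power_divide)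
  have "Inf rate_set \<le> expected_sandwich_sq (c \<cdot>\<^sub>m R)"
    by (rule Inf_rate_set_le)
      (use c2 frob_dot_smult_self[OF Rc] sandwich_space_smult[OF A_carrier R] in auto)
  also have "\<dots> = c\<^sup>2 * expected_sandwich_sq R" by (rule expected_sandwich_sq_smult[OF Rc])
  finally have "Inf rate_set * frob_dot n R R \<le> c\<^sup>2 * expected_sandwich_sq R * frob_dot n R R"
    using pos by (simp add: mult_right_mono)
  also have "\<dots> = expected_sandwich_sq R" using c2 by (simp add: mult_ac)
  finally show ?thesis .
qed

lemma unit_in_sandwich_space:
  assumes A_nonzero: "A \<noteq> 0\<^sub>m n n"
  obtains R where "R \<in> sandwich_space n A" "frob_dot n R R = 1"
proof -
  have pos: "frob_dot n A A > 0"
    using frob_dot_self_eq_0[OF A_carrier] frob_dot_self_nonneg[of n A] A_nonzero by fastforce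
  define c where "c = 1 / sqrt (frob_dot n A A)"
  have "frob_dot n (c \<cdot>\<^sub>m A) (c \<cdot>\<^sub>m A) = 1"
    unfolding frob_dot_smult_self[OF A_carrier] c_def using pos by (simp add: power_divide)
  moreover have "c \<cdot>\<^sub>m A \<in> sandwich_space n A"
    by (rule sandwich_space_smult[OF A_carrier self_in_sandwich_space[OF A_carrier A_sym]])
  ultimately show ?thesis using that by blast
qed

lemma Inf_rate_set_le_1:
  assumes A_nonzero: "A \<noteq> 0\<^sub>m n n"
  shows "Inf rate_set \<le> 1"
proof -
  obtain R where R: "R \<in> sandwich_space n A" "frob_dot n R R = 1"
    using unit_in_sandwich_space[OF A_nonzero] .
  have "Inf rate_set \<le> expected_sandwich_sq R" by (rule Inf_rate_set_le[OF R])
  also have "\<dots> \<le> 1"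
    using expected_sandwich_sq_le[OF sandwich_space_carrier[OF A_carrier R(1)]] R(2) by simp
  finally show ?thesis .
qed

lemma expected_err_le:
  assumes W: "W \<in> carrier_mat n n" and rate_le_1: "Inf rate_set \<le> 1"
  shows "expected_err A S p r W k \<le> (1 - Inf rate_set) ^ k * frob_sq (A * W * A - pinv A)"
proof (induction k)
  case 0
  have "{is. length is = 0 \<and> set is \<subseteq> {1..r}} = {[]}" by auto
  then show ?case unfolding expected_err_def iterate_def by simp
next
  case (Suc k)
  let ?E = "\<lambda>is. iterate A S W is - pinv A"
  have "expected_err A S p r W (Suc k)
      \<le> (\<Sum>is\<in>{is. length is = k \<and> set is \<subseteq> {1..r}}.
          (\<Prod>i\<leftarrow>is. p i) * ((1 - Inf rate_set) * frob_sq (?E is)))"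
    unfolding expected_err_Suc[OF W]
  proof (intro sum_mono mult_left_mono)
    fix "is" assume "is": "is \<in> {is. length is = k \<and> set is \<subseteq> {1..r}}"
    have "\<forall>i\<in>set is. p i \<ge> 0" using "is" p_nonneg by blast
    thus "0 \<le> (\<Prod>i\<leftarrow>is. p i)" by (intro prod_list_nonneg) auto
    have E: "?E is \<in> sandwich_space n A"
      using iterate_minus_pinv_in_sandwich_space[OF A_carrier A_sym W S_carrier] "is" by auto
    show "frob_dot n (?E is) (?E is) - expected_sandwich_sq (?E is)
      \<le> (1 - Inf rate_set) * frob_sq (?E is)"
      using Inf_rate_set_mult_le[OF E] sandwich_space_carrier[OF A_carrier E]
      by (simp add: frob_sq_eq_frob_dot algebra_simps)
  qed
  also have "\<dots> = (1 - Inf rate_set) * expected_err A S p r W k"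
    unfolding expected_err_def sum_distrib_left by (simp add: mult_ac)
  also have "\<dots> \<le> (1 - Inf rate_set) * ((1 - Inf rate_set) ^ k * frob_sq (A * W * A - pinv A))"
    using Suc rate_le_1 by (intro mult_left_mono) auto
  finally show ?case by simp
qed

end

subsection \<open>Positivity of the rate under the null space condition\<close>

lemma bounded_seq_convergent_subseq:
  fixes f :: "nat \<Rightarrow> 'k \<Rightarrow> real"
  assumes K: "finite K" and b: "\<forall>k\<in>K. \<forall>m. \<bar>f m k\<bar> \<le> B"
  shows "\<exists>\<sigma> L. strict_mono \<sigma> \<and> (\<forall>k\<in>K. (\<lambda>m. f (\<sigma> m) k) \<longlonglongrightarrow> L k)"
  using K b
proof (induction K rule: finite_induct)
  case empty
  show ?case by (rule exI[of _ id]) (auto simp: strict_mono_def)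
next
  case (insert k K)
  then obtain \<sigma> L where s: "strict_mono \<sigma>" and l: "\<forall>k\<in>K. (\<lambda>m. f (\<sigma> m) k) \<longlonglongrightarrow> L k" by auto
  obtain \<tau> where t: "strict_mono \<tau>" and mono: "monoseq (\<lambda>m. f (\<sigma> (\<tau> m)) k)"
    using seq_monosub[of "\<lambda>m. f (\<sigma> m) k"] by blast
  have "Bseq (\<lambda>m. f (\<sigma> (\<tau> m)) k)" by (rule BseqI'[of _ B]) (use insert.prems in auto)
  then obtain l where ll: "(\<lambda>m. f (\<sigma> (\<tau> m)) k) \<longlonglongrightarrow> l"
    using Bseq_monoseq_convergent[OF _ mono] convergent_def by blast
  show ?case
  proof (intro exI[of _ "\<sigma> \<circ> \<tau>"] exI[of _ "L(k := l)"] conjI ballI)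
    show "strict_mono (\<sigma> \<circ> \<tau>)" by (rule strict_mono_o[OF s t])
    fix k' assume k': "k' \<in> insert k K"
    show "(\<lambda>m. f ((\<sigma> \<circ> \<tau>) m) k') \<longlonglongrightarrow> (L(k := l)) k'"
    proof (cases "k' = k")
      case True then show ?thesis using ll by simp
    next
      case False
      hence "(\<lambda>m. f (\<sigma> m) k') \<longlonglongrightarrow> L k'" using l k' by auto
      from LIMSEQ_subseq_LIMSEQ[OF this t] show ?thesis using False by (simp add: comp_def)
    qed
  qed
qed

lemma tendsto_index_mult_mult:
  fixes F :: "nat \<Rightarrow> real mat"
  assumes X: "X \<in> carrier_mat n n" and Y: "Y \<in> carrier_mat n n" and F: "\<And>m. F m \<in> carrier_mat n n"
    and G: "G \<in> carrier_mat n n"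
    and lim: "\<And>a b. a < n \<Longrightarrow> b < n \<Longrightarrow> (\<lambda>m. F m $$ (a, b)) \<longlonglongrightarrow> G $$ (a, b)"
    and ab: "a < n" "b < n"
  shows "(\<lambda>m. (X * F m * Y) $$ (a, b)) \<longlonglongrightarrow> (X * G * Y) $$ (a, b)"
proof -
  have e: "(X * H * Y) $$ (a, b) = (\<Sum>c<n. (\<Sum>d<n. X $$ (a, d) * H $$ (d, c)) * Y $$ (c, b))"
    if H: "H \<in> carrier_mat n n" for H
  proof -
    have "(X * H * Y) $$ (a, b) = (\<Sum>c<n. (X * H) $$ (a, c) * Y $$ (c, b))"
      using X Y H ab by (subst index_mult_mat_sum) auto
    also have "\<dots> = (\<Sum>c<n. (\<Sum>d<n. X $$ (a, d) * H $$ (d, c)) * Y $$ (c, b))"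
      using X H ab by (intro sum.cong refl) (subst index_mult_mat_sum, auto)
    finally show ?thesis .
  qed
  show ?thesis unfolding e[OF F] e[OF G] by (intro tendsto_intros lim) auto
qed

lemma tendsto_frob_dot:
  fixes F :: "nat \<Rightarrow> real mat"
  assumes "\<And>a b. a < n \<Longrightarrow> b < n \<Longrightarrow> (\<lambda>m. F m $$ (a, b)) \<longlonglongrightarrow> G $$ (a, b)"
  shows "(\<lambda>m. frob_dot n (F m) (F m)) \<longlonglongrightarrow> frob_dot n G G"
  unfolding frob_dot_def by (intro tendsto_intros assms) auto

text \<open>The limit stays in the sandwich space since membership is the closed condition
  \<open>A A\<^sup>\<dagger> R A\<^sup>\<dagger> A = R\<close>.\<close>

lemma unit_sandwich_seq_convergent_subseq:
  fixes Rs :: "nat \<Rightarrow> real mat"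
  assumes A: "A \<in> carrier_mat n n" and As: "transpose_mat A = A"
    and Rs: "\<And>m. Rs m \<in> sandwich_space n A" and unit: "\<And>m. frob_dot n (Rs m) (Rs m) = 1"
  obtains \<sigma> R0 where "strict_mono \<sigma>" "R0 \<in> carrier_mat n n"
    "\<And>a b. a < n \<Longrightarrow> b < n \<Longrightarrow> (\<lambda>m. Rs (\<sigma> m) $$ (a, b)) \<longlonglongrightarrow> R0 $$ (a, b)"
    "frob_dot n R0 R0 = 1" "(A * pinv A) * R0 * (pinv A * A) = R0"
proof -
  have Rc: "Rs m \<in> carrier_mat n n" for m by (rule sandwich_space_carrier[OF A Rs])
  have bounded: "\<forall>k\<in>{..<n} \<times> {..<n}. \<forall>m. \<bar>(\<lambda>m (a, b). Rs m $$ (a, b)) m k\<bar> \<le> 1"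
  proof (intro ballI allI)
    fix k m assume k: "k \<in> {..<n} \<times> {..<n}"
    obtain a b where kab: "k = (a, b)" by (cases k)
    have "(Rs m $$ (a, b))\<^sup>2 \<le> 1" using index_sq_le_frob_dot[of a n b "Rs m"] k unit kab by auto
    hence "\<bar>Rs m $$ (a, b)\<bar> \<le> 1" by (metis abs_square_le_1)
    thus "\<bar>(\<lambda>m (a, b). Rs m $$ (a, b)) m k\<bar> \<le> 1" using kab by simp
  qed
  obtain \<sigma> L where sm: "strict_mono \<sigma>"
    and lim: "\<forall>k\<in>{..<n} \<times> {..<n}. (\<lambda>m. (\<lambda>m (a, b). Rs m $$ (a, b)) (\<sigma> m) k) \<longlonglongrightarrow> L k"
    using bounded_seq_convergent_subseq[OF _ bounded] by blast
  define R0 where "R0 = mat n n L"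
  have R0c: "R0 \<in> carrier_mat n n" unfolding R0_def by simp
  have c: "(\<lambda>m. Rs (\<sigma> m) $$ (a, b)) \<longlonglongrightarrow> R0 $$ (a, b)" if "a < n" "b < n" for a b
    using lim that unfolding R0_def by auto
  have "(\<lambda>m. frob_dot n (Rs (\<sigma> m)) (Rs (\<sigma> m))) \<longlonglongrightarrow> frob_dot n R0 R0"
    by (rule tendsto_frob_dot) (rule c)
  hence R01: "frob_dot n R0 R0 = 1" using unit by (simp add: LIMSEQ_const_iff)
  define P where "P = A * pinv A"
  define P' where "P' = pinv A * A"
  have Pc: "P \<in> carrier_mat n n" "P' \<in> carrier_mat n n"
    unfolding P_def P'_def using A pinv_sym(2)[OF A As] by auto
  have "P * R0 * P' = R0"
  proof (rule eq_matI)
    fix a b assume "a < dim_row R0" "b < dim_col R0"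
    hence ab: "a < n" "b < n" using R0c by auto
    have "(\<lambda>m. (P * Rs (\<sigma> m) * P') $$ (a, b)) \<longlonglongrightarrow> (P * R0 * P') $$ (a, b)"
      by (rule tendsto_index_mult_mult[OF Pc Rc R0c c ab])
    moreover have "P * Rs (\<sigma> m) * P' = Rs (\<sigma> m)" for m
      unfolding P_def P'_def by (rule sandwich_space_fixed[OF A As Rs])
    ultimately have "(\<lambda>m. Rs (\<sigma> m) $$ (a, b)) \<longlonglongrightarrow> (P * R0 * P') $$ (a, b)" by simp
    thus "(P * R0 * P') $$ (a, b) = R0 $$ (a, b)" using c[OF ab] LIMSEQ_unique by blast
  qed (use Pc R0c in auto)
  with sm R0c c R01 show ?thesis unfolding P_def P'_def by (rule that)
qed

text \<open>\<open>S\<^sup>T A R A S = (S\<^sup>T A) Z R Z (A S)\<close>, since \<open>S\<^sup>T A Z = S\<^sup>T A\<close> and \<open>Z\<close> is symmetric.\<close>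

lemma Zmat_sandwich_eq_0_imp:
  assumes A: "A \<in> carrier_mat n n" and As: "transpose_mat A = A" and Si: "Si \<in> carrier_mat n q"
    and R: "R \<in> carrier_mat n n" and zero: "Zmat A Si * R * Zmat A Si = 0\<^sub>m n n"
  shows "transpose_mat Si * A * R * A * Si = 0\<^sub>m q q"
proof -
  define U where "U = transpose_mat Si * A"
  define Z where "Z = Zmat A Si"
  have Uc: "U \<in> carrier_mat q n" unfolding U_def using Si A by auto
  have Zc: "Z \<in> carrier_mat n n" unfolding Z_def by (rule Zmat_props(1)[OF A As Si])
  have d: "dim_row U = q" "dim_col U = n" "dim_row Z = n" "dim_col Z = n" "dim_row R = n"
    "dim_col R = n" "dim_row Si = n" "dim_col Si = q" "dim_row A = n" "dim_col A = n"
    using Uc Zc R Si A by auto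
  have UZ: "U * Z = U" unfolding U_def Z_def by (rule Zmat_props(4)[OF A As Si])
  have TU: "transpose_mat U = A * Si" unfolding U_def using As by (simp add: transpose_mult_dims d)
  have "transpose_mat (U * Z) = transpose_mat Z * transpose_mat U"
    by (rule transpose_mult_dims) (simp add: d)
  hence ZTU: "Z * transpose_mat U = transpose_mat U"
    using UZ Zmat_props(2)[OF A As Si] unfolding Z_def by simp
  have "transpose_mat Si * A * R * A * Si = U * R * transpose_mat U"
    unfolding TU unfolding U_def by (simp add: assoc_mult_mat_dims d)
  also have "\<dots> = (U * Z) * R * (Z * transpose_mat U)" using UZ ZTU by simp
  also have "\<dots> = U * (Z * R * Z) * transpose_mat U" by (simp add: assoc_mult_mat_dims d)
  also have "\<dots> = 0\<^sub>m q q" using zero Uc unfolding Z_def by simp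
  finally show ?thesis .
qed

context sketching
begin

lemma tendsto_expected_sandwich_sq:
  assumes Rs: "\<And>m. Rs m \<in> carrier_mat n n" and R0: "R0 \<in> carrier_mat n n"
    and lim: "\<And>a b. a < n \<Longrightarrow> b < n \<Longrightarrow> (\<lambda>m. Rs m $$ (a, b)) \<longlonglongrightarrow> R0 $$ (a, b)"
  shows "(\<lambda>m. expected_sandwich_sq (Rs m)) \<longlonglongrightarrow> expected_sandwich_sq R0"
  unfolding expected_sandwich_sq_def
proof (intro tendsto_sum tendsto_mult tendsto_const tendsto_frob_dot)
  fix i a b assume i: "i \<in> {1..r}" and ab: "a < n" "b < n"
  show "(\<lambda>m. (Zmat A (S i) * Rs m * Zmat A (S i)) $$ (a, b))
    \<longlonglongrightarrow> (Zmat A (S i) * R0 * Zmat A (S i)) $$ (a, b)"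
    by (rule tendsto_index_mult_mult[OF Zmat_S(1)[OF i] Zmat_S(1)[OF i] Rs R0 lim ab])
qed

text \<open>For \<open>R\<close> in the sandwich space, \<open>A R A = 0\<close> forces \<open>R = A\<^sup>\<dagger> (A R A) A\<^sup>\<dagger> = 0\<close>.\<close>

lemma expected_sandwich_sq_eq_0_imp_zero:
  assumes cond: "\<forall>R\<in>carrier_mat n n.
      (\<forall>i\<in>{1..r}. transpose_mat (S i) * A * R * A * S i = 0\<^sub>m (q i) (q i)) \<longrightarrow> A * R * A = 0\<^sub>m n n"
    and R: "R \<in> carrier_mat n n" and fixed: "(A * pinv A) * R * (pinv A * A) = R"
    and zero: "expected_sandwich_sq R = 0"
  shows "R = 0\<^sub>m n n"
proof -
  have ZRZ: "Zmat A (S i) * R * Zmat A (S i) = 0\<^sub>m n n" if i: "i \<in> {1..r}" for i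
  proof -
    let ?g = "\<lambda>i. p i * frob_dot n (Zmat A (S i) * R * Zmat A (S i)) (Zmat A (S i) * R * Zmat A (S i))"
    have "\<forall>i\<in>{1..r}. 0 \<le> ?g i" by (intro ballI mult_nonneg_nonneg p_nonneg frob_dot_self_nonneg)
    hence "\<forall>i\<in>{1..r}. ?g i = 0"
      using zero sum_nonneg_eq_0_iff[of "{1..r}" ?g] unfolding expected_sandwich_sq_def by simp
    hence "?g i = 0" using i by blast
    moreover have "p i > 0" using p_pos i by blast
    ultimately have "frob_dot n (Zmat A (S i) * R * Zmat A (S i)) (Zmat A (S i) * R * Zmat A (S i)) = 0"
      by simp
    thus ?thesis by (rule frob_dot_self_eq_0[rotated]) (use Zmat_S(1)[OF i] R in auto)
  qed
  have "transpose_mat (S i) * A * R * A * S i = 0\<^sub>m (q i) (q i)" if i: "i \<in> {1..r}" for i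
    by (rule Zmat_sandwich_eq_0_imp[OF A_carrier A_sym _ R ZRZ[OF i]]) (use S_carrier i in auto)
  hence ARA: "A * R * A = 0\<^sub>m n n" using cond R by blast
  have Apc: "pinv A \<in> carrier_mat n n" and comm: "A * pinv A = pinv A * A"
    using pinv_sym(2,4)[OF A_carrier A_sym] by auto
  have "R = pinv A * (A * R * A) * pinv A"
  proof -
    have "R = (pinv A * A) * R * (A * pinv A)" using fixed comm by simp
    also have "\<dots> = pinv A * (A * R * A) * pinv A" using R A_carrier Apc by (simp add: assoc_mult_mat_dims)
    finally show ?thesis .
  qed
  thus ?thesis using ARA Apc by simp
qed

lemma Inf_rate_set_pos:
  assumes A_nonzero: "A \<noteq> 0\<^sub>m n n"
    and cond: "\<forall>R\<in>carrier_mat n n.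
      (\<forall>i\<in>{1..r}. transpose_mat (S i) * A * R * A * S i = 0\<^sub>m (q i) (q i)) \<longrightarrow> A * R * A = 0\<^sub>m n n"
  shows "Inf rate_set > 0"
proof (rule ccontr)
  assume "\<not> Inf rate_set > 0"
  have ne: "rate_set \<noteq> {}"
    using unit_in_sandwich_space[OF A_nonzero] unfolding rate_set_eq by blast
  have "\<forall>m. \<exists>R. R \<in> sandwich_space n A \<and> frob_dot n R R = 1 \<and>
      expected_sandwich_sq R < 1 / real (Suc m)"
  proof
    fix m
    have "0 < 1 / real (Suc m)" by simp
    hence "Inf rate_set < 1 / real (Suc m)" using \<open>\<not> Inf rate_set > 0\<close> by linarith
    then obtain x where "x \<in> rate_set" "x < 1 / real (Suc m)" using cInf_lessD[OF ne] by blast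
    thus "\<exists>R. R \<in> sandwich_space n A \<and> frob_dot n R R = 1 \<and>
      expected_sandwich_sq R < 1 / real (Suc m)"
      unfolding rate_set_eq by blast
  qed
  from choice[OF this] obtain Rs where "\<forall>m. Rs m \<in> sandwich_space n A \<and>
      frob_dot n (Rs m) (Rs m) = 1 \<and> expected_sandwich_sq (Rs m) < 1 / real (Suc m)"
    by (elim exE)
  hence Rs: "\<And>m. Rs m \<in> sandwich_space n A" "\<And>m. frob_dot n (Rs m) (Rs m) = 1"
    "\<And>m. expected_sandwich_sq (Rs m) < 1 / real (Suc m)"
    by simp_all
  obtain \<sigma> R0 where sm: "strict_mono \<sigma>" and R0: "R0 \<in> carrier_mat n n"
    and lim: "\<And>a b. a < n \<Longrightarrow> b < n \<Longrightarrow> (\<lambda>m. Rs (\<sigma> m) $$ (a, b)) \<longlonglongrightarrow> R0 $$ (a, b)"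
    and unit: "frob_dot n R0 R0 = 1" and fixed: "(A * pinv A) * R0 * (pinv A * A) = R0"
    by (erule unit_sandwich_seq_convergent_subseq[where Rs = Rs, OF A_carrier A_sym Rs(1,2)])
  have "(\<lambda>m. expected_sandwich_sq (Rs (\<sigma> m))) \<longlonglongrightarrow> expected_sandwich_sq R0"
    by (rule tendsto_expected_sandwich_sq[where Rs = "\<lambda>m. Rs (\<sigma> m)", OF _ R0 lim])
      (rule sandwich_space_carrier[OF A_carrier Rs(1)])
  moreover have "(\<lambda>m. expected_sandwich_sq (Rs (\<sigma> m))) \<longlonglongrightarrow> 0"
  proof (rule real_tendsto_sandwich)
    show "\<forall>\<^sub>F m in sequentially. 0 \<le> expected_sandwich_sq (Rs (\<sigma> m))"
      using expected_sandwich_sq_nonneg by simp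
    have "expected_sandwich_sq (Rs (\<sigma> m)) \<le> inverse (real (Suc m))" for m
    proof -
      have "m \<le> \<sigma> m" using seq_suble[OF sm] by simp
      hence "1 / real (Suc (\<sigma> m)) \<le> inverse (real (Suc m))" by (simp add: divide_simps)
      thus ?thesis using Rs(3)[of "\<sigma> m"] by linarith
    qed
    thus "\<forall>\<^sub>F m in sequentially. expected_sandwich_sq (Rs (\<sigma> m)) \<le> inverse (real (Suc m))" by simp
    show "(\<lambda>m. 0) \<longlonglongrightarrow> (0::real)" by simp
    show "(\<lambda>m. inverse (real (Suc m))) \<longlonglongrightarrow> 0" by (rule LIMSEQ_inverse_real_of_nat)
  qed
  ultimately have "expected_sandwich_sq R0 = 0" using LIMSEQ_unique by blast
  hence "R0 = 0\<^sub>m n n" by (rule expected_sandwich_sq_eq_0_imp_zero[OF cond R0 fixed])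
  thus False using unit by (simp add: frob_dot_def)
qed

end

subsection \<open>The null space condition in Kronecker form\<close>

text \<open>Column-stacking vectorisation: entry \<open>(a, b)\<close> of an \<open>m \<times> k\<close> matrix goes to position
  \<open>a + m b\<close>, so that \<open>(P \<otimes> Q) vec X = vec (Q X P\<^sup>T)\<close>.\<close>

definition vectorize :: "real mat \<Rightarrow> real vec" where
  "vectorize X = vec (dim_row X * dim_col X) (\<lambda>t. X $$ (t mod dim_row X, t div dim_row X))"

lemma vectorize_carrier[simp]: "X \<in> carrier_mat m k \<Longrightarrow> vectorize X \<in> carrier_vec (m * k)"
  unfolding vectorize_def by auto

lemma sum_lessThan_mult_nat: "(\<Sum>j<p * q. f j) = (\<Sum>c<p. \<Sum>d<q. f (c * q + d :: nat))"
proof -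
  have "(\<Sum>j<p * q. f j) = (\<Sum>c<p. sum f {c * q..<c * q + q})" by (rule sum.nat_group[symmetric])
  also have "\<dots> = (\<Sum>c<p. \<Sum>d<q. f (c * q + d))"
  proof (rule sum.cong[OF refl])
    fix c assume "c \<in> {..<p}"
    have "sum f {0 + c * q..<q + c * q} = (\<Sum>d\<in>{0..<q}. f (d + c * q))"
      by (rule sum.shift_bounds_nat_ivl)
    thus "sum f {c * q..<c * q + q} = (\<Sum>d<q. f (c * q + d))"
      by (simp add: add.commute lessThan_atLeast0)
  qed
  finally show ?thesis .
qed

lemma kron_mult_vectorize:
  assumes P: "P \<in> carrier_mat p1 p2" and Q: "Q \<in> carrier_mat q1 q2" and X: "X \<in> carrier_mat q2 p2"
  shows "kron P Q *\<^sub>v vectorize X = vectorize (Q * X * transpose_mat P)"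
proof (rule eq_vecI)
  have dk: "dim_row (kron P Q) = p1 * q1" "dim_col (kron P Q) = p2 * q2"
    using P Q unfolding kron_def by auto
  have dr: "dim_row (Q * X * transpose_mat P) = q1" "dim_col (Q * X * transpose_mat P) = p1"
    using P Q X by auto
  show "dim_vec (kron P Q *\<^sub>v vectorize X) = dim_vec (vectorize (Q * X * transpose_mat P))"
    using dk dr unfolding vectorize_def by (simp add: mult.commute)
  fix i assume "i < dim_vec (vectorize (Q * X * transpose_mat P))"
  hence i: "i < q1 * p1" using dr unfolding vectorize_def by simp
  hence q1: "q1 > 0" by (cases q1) auto
  have im: "i mod q1 < q1" "i div q1 < p1" using i q1 by (auto simp: less_mult_imp_div_less mult.commute)
  have dvx: "dim_vec (vectorize X) = p2 * q2" using X unfolding vectorize_def by (simp add: mult.commute)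
  have "(kron P Q *\<^sub>v vectorize X) $ i = (\<Sum>j<p2 * q2. kron P Q $$ (i, j) * vectorize X $ j)"
  proof -
    have i': "i < dim_row (kron P Q)" using i dk by (simp add: mult.commute)
    have "(kron P Q *\<^sub>v vectorize X) $ i = row (kron P Q) i \<bullet> vectorize X" using i' by simp
    also have "\<dots> = (\<Sum>j\<in>{0..<p2 * q2}. row (kron P Q) i $ j * vectorize X $ j)"
      unfolding scalar_prod_def dvx ..
    also have "\<dots> = (\<Sum>j<p2 * q2. kron P Q $$ (i, j) * vectorize X $ j)"
      unfolding lessThan_atLeast0 using i' dk by (intro sum.cong refl) auto
    finally show ?thesis .
  qed
  also have "\<dots> = (\<Sum>c<p2. \<Sum>d<q2. kron P Q $$ (i, c * q2 + d) * vectorize X $ (c * q2 + d))"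
    by (rule sum_lessThan_mult_nat)
  also have "\<dots> = (\<Sum>c<p2. \<Sum>d<q2. P $$ (i div q1, c) * Q $$ (i mod q1, d) * X $$ (d, c))"
  proof (intro sum.cong refl)
    fix c d assume c: "c \<in> {..<p2}" and d: "d \<in> {..<q2}"
    have "c * q2 + d < Suc c * q2" using d by simp
    also have "\<dots> \<le> p2 * q2" using c by (intro mult_le_mono1) simp
    finally have cd: "c * q2 + d < p2 * q2" .
    have dm: "(c * q2 + d) mod q2 = d" "(c * q2 + d) div q2 = c" using d by auto
    have "kron P Q $$ (i, c * q2 + d) = P $$ (i div q1, c) * Q $$ (i mod q1, d)"
      unfolding kron_def using P Q i cd dm by (simp add: mult.commute)
    moreover have "vectorize X $ (c * q2 + d) = X $$ (d, c)"
      unfolding vectorize_def using X cd dm by (simp add: mult.commute)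
    ultimately show "kron P Q $$ (i, c * q2 + d) * vectorize X $ (c * q2 + d)
        = P $$ (i div q1, c) * Q $$ (i mod q1, d) * X $$ (d, c)"
      by simp
  qed
  also have "\<dots> = (Q * X * transpose_mat P) $$ (i mod q1, i div q1)"
  proof -
    have "(Q * X * transpose_mat P) $$ (i mod q1, i div q1)
        = (\<Sum>c<p2. (Q * X) $$ (i mod q1, c) * transpose_mat P $$ (c, i div q1))"
      using P Q X im by (subst index_mult_mat_sum) auto
    also have "\<dots> = (\<Sum>c<p2. (\<Sum>d<q2. Q $$ (i mod q1, d) * X $$ (d, c)) * P $$ (i div q1, c))"
      using P Q X im by (intro sum.cong refl) (subst index_mult_mat_sum, auto)
    finally show ?thesis by (simp add: sum_distrib_left mult_ac)
  qed
  also have "\<dots> = vectorize (Q * X * transpose_mat P) $ i" unfolding vectorize_def using dr i by simp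
  finally show "(kron P Q *\<^sub>v vectorize X) $ i = vectorize (Q * X * transpose_mat P) $ i" .
qed

lemma vectorize_eq_0_iff:
  assumes X: "X \<in> carrier_mat m k"
  shows "vectorize X = 0\<^sub>v (m * k) \<longleftrightarrow> X = 0\<^sub>m m k"
proof
  assume z: "vectorize X = 0\<^sub>v (m * k)"
  show "X = 0\<^sub>m m k"
  proof (rule eq_matI)
    fix a b assume "a < dim_row (0\<^sub>m m k)" "b < dim_col (0\<^sub>m m k)"
    hence ab: "a < m" "b < k" by auto
    have "a + m * b < m * Suc b" using ab by simp
    also have "\<dots> \<le> m * k" using ab by (intro mult_le_mono2) simp
    finally have t: "a + m * b < m * k" .
    have dm: "(a + m * b) mod m = a" "(a + m * b) div m = b" using ab by auto
    have "vectorize X $ (a + m * b) = X $$ (a, b)" unfolding vectorize_def using X t dm by simp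
    thus "X $$ (a, b) = 0\<^sub>m m k $$ (a, b)" using z t ab by simp
  qed (use X in auto)
next
  assume X0: "X = 0\<^sub>m m k"
  show "vectorize X = 0\<^sub>v (m * k)"
  proof (rule eq_vecI)
    fix t assume "t < dim_vec (0\<^sub>v (m * k))"
    hence t: "t < m * k" by simp
    hence m: "m > 0" by (cases m) auto
    have "t mod m < m" "t div m < k" using t m by (auto simp: less_mult_imp_div_less mult.commute)
    thus "vectorize X $ t = 0\<^sub>v (m * k) $ t" unfolding vectorize_def X0 using t by simp
  qed (simp add: vectorize_def X0)
qed

lemma vectorize_surj:
  assumes v: "v \<in> carrier_vec (n * n)"
  obtains R where "R \<in> carrier_mat n n" "vectorize R = v"
proof
  show "mat n n (\<lambda>(a, b). v $ (a + n * b)) \<in> carrier_mat n n" by simp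
  show "vectorize (mat n n (\<lambda>(a, b). v $ (a + n * b))) = v"
  proof (rule eq_vecI)
    fix t assume "t < dim_vec v"
    hence t: "t < n * n" using v by auto
    hence n: "n > 0" by (cases n) auto
    have "t mod n < n" "t div n < n" using t n by (auto simp: less_mult_imp_div_less)
    moreover have "t mod n + n * (t div n) = t" by simp
    ultimately show "vectorize (mat n n (\<lambda>(a, b). v $ (a + n * b))) $ t = v $ t"
      unfolding vectorize_def using t by simp
  qed (use v in \<open>auto simp: vectorize_def\<close>)
qed

lemma stack_kron_foldr:
  assumes S: "\<forall>i\<in>set xs. S i \<in> carrier_mat n (q i)" and w: "w \<in> carrier_vec (n * n)"
  shows "foldr (\<lambda>i M. kron (transpose_mat (S i)) (transpose_mat (S i)) @\<^sub>r M) xs (0\<^sub>m 0 (n * n))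
      \<in> carrier_mat (\<Sum>i\<leftarrow>xs. q i * q i) (n * n) \<and>
    (foldr (\<lambda>i M. kron (transpose_mat (S i)) (transpose_mat (S i)) @\<^sub>r M) xs (0\<^sub>m 0 (n * n)) *\<^sub>v w
       = 0\<^sub>v (\<Sum>i\<leftarrow>xs. q i * q i) \<longleftrightarrow>
     (\<forall>i\<in>set xs. kron (transpose_mat (S i)) (transpose_mat (S i)) *\<^sub>v w = 0\<^sub>v (q i * q i)))"
  using S
proof (induction xs)
  case Nil
  have "0\<^sub>m 0 (n * n) *\<^sub>v w = 0\<^sub>v 0" by (rule eq_vecI) auto
  then show ?case by simp
next
  case (Cons i xs)
  let ?M = "foldr (\<lambda>i M. kron (transpose_mat (S i)) (transpose_mat (S i)) @\<^sub>r M) xs (0\<^sub>m 0 (n * n))"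
  let ?K = "kron (transpose_mat (S i)) (transpose_mat (S i))"
  have IH: "?M \<in> carrier_mat (\<Sum>i\<leftarrow>xs. q i * q i) (n * n)"
    "?M *\<^sub>v w = 0\<^sub>v (\<Sum>i\<leftarrow>xs. q i * q i) \<longleftrightarrow>
      (\<forall>i\<in>set xs. kron (transpose_mat (S i)) (transpose_mat (S i)) *\<^sub>v w = 0\<^sub>v (q i * q i))"
    using Cons by auto
  have Si: "S i \<in> carrier_mat n (q i)" using Cons.prems by auto
  have Kc: "?K \<in> carrier_mat (q i * q i) (n * n)" using Si unfolding kron_def by auto
  have e: "(?K @\<^sub>r ?M) *\<^sub>v w = (?K *\<^sub>v w) @\<^sub>v (?M *\<^sub>v w)" by (rule mat_mult_append[OF Kc IH(1) w])
  have z: "0\<^sub>v (q i * q i + (\<Sum>i\<leftarrow>xs. q i * q i)) = (0\<^sub>v (q i * q i) :: real vec) @\<^sub>v 0\<^sub>v (\<Sum>i\<leftarrow>xs. q i * q i)"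
    by (rule eq_vecI) auto
  have "(?K @\<^sub>r ?M) *\<^sub>v w = 0\<^sub>v (q i * q i + (\<Sum>i\<leftarrow>xs. q i * q i)) \<longleftrightarrow>
        ?K *\<^sub>v w = 0\<^sub>v (q i * q i) \<and> ?M *\<^sub>v w = 0\<^sub>v (\<Sum>i\<leftarrow>xs. q i * q i)"
    unfolding e z using Kc w by (subst append_vec_eq[of _ "q i * q i"]) auto
  then show ?case using Kc IH by auto
qed

lemma vectorize_in_kernel_kron_iff:
  assumes A: "A \<in> carrier_mat n n" and As: "transpose_mat A = A" and R: "R \<in> carrier_mat n n"
  shows "vectorize R \<in> mat_kernel (kron A A) \<longleftrightarrow> A * R * A = 0\<^sub>m n n"
proof -
  have "kron A A \<in> carrier_mat (n * n) (n * n)" unfolding kron_def using A by auto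
  moreover have "kron A A *\<^sub>v vectorize R = vectorize (A * R * A)"
    using kron_mult_vectorize[OF A A R] As by simp
  moreover have "A * R * A \<in> carrier_mat n n" using A R by auto
  ultimately show ?thesis unfolding mat_kernel_def using R by (simp add: vectorize_eq_0_iff)
qed

lemma vectorize_in_kernel_stack_kron_iff:
  assumes A: "A \<in> carrier_mat n n" and As: "transpose_mat A = A" and R: "R \<in> carrier_mat n n"
    and S: "\<forall>i\<in>{1..r}. S i \<in> carrier_mat n (q i)"
  shows "vectorize R \<in> mat_kernel (stack_kron n S r * kron A A) \<longleftrightarrow>
    (\<forall>i\<in>{1..r}. transpose_mat (S i) * A * R * A * S i = 0\<^sub>m (q i) (q i))"
proof -
  define D where "D = (\<Sum>i\<leftarrow>[1..<Suc r]. q i * q i)"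
  have setr: "set [1..<Suc r] = {1..r}" by auto
  have ARA: "A * R * A \<in> carrier_mat n n" using A R by auto
  have w: "vectorize (A * R * A) \<in> carrier_vec (n * n)" using ARA by simp
  have St: "stack_kron n S r \<in> carrier_mat D (n * n)"
    and St0: "stack_kron n S r *\<^sub>v vectorize (A * R * A) = 0\<^sub>v D \<longleftrightarrow>
      (\<forall>i\<in>{1..r}. kron (transpose_mat (S i)) (transpose_mat (S i)) *\<^sub>v vectorize (A * R * A)
        = 0\<^sub>v (q i * q i))"
    using stack_kron_foldr[of "[1..<Suc r]" S n q, OF _ w] S
    unfolding stack_kron_def D_def setr by auto
  have KA: "kron A A \<in> carrier_mat (n * n) (n * n)" unfolding kron_def using A by auto
  have KAv: "kron A A *\<^sub>v vectorize R = vectorize (A * R * A)"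
    using kron_mult_vectorize[OF A A R] As by simp
  have "(stack_kron n S r * kron A A) *\<^sub>v vectorize R = stack_kron n S r *\<^sub>v vectorize (A * R * A)"
    using assoc_mult_mat_vec[OF St KA vectorize_carrier[OF R]] KAv by simp
  hence kernel_iff: "vectorize R \<in> mat_kernel (stack_kron n S r * kron A A)
      \<longleftrightarrow> stack_kron n S r *\<^sub>v vectorize (A * R * A) = 0\<^sub>v D"
    unfolding mat_kernel_def mem_Collect_eq using St KA R by simp
  have "kron (transpose_mat (S i)) (transpose_mat (S i)) *\<^sub>v vectorize (A * R * A) = 0\<^sub>v (q i * q i)
      \<longleftrightarrow> transpose_mat (S i) * A * R * A * S i = 0\<^sub>m (q i) (q i)" if i: "i \<in> {1..r}" for i
  proof -
    have Si: "S i \<in> carrier_mat n (q i)" using S i by auto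
    have "transpose_mat (S i) * (A * R * A) * S i = transpose_mat (S i) * A * R * A * S i"
      using Si A R by (simp add: assoc_mult_mat_dims)
    moreover have "transpose_mat (S i) * (A * R * A) * S i \<in> carrier_mat (q i) (q i)"
      using Si ARA by auto
    ultimately show ?thesis
      using kron_mult_vectorize[of "transpose_mat (S i)" "q i" n "transpose_mat (S i)" "q i" n
          "A * R * A"] Si ARA
      by (simp add: vectorize_eq_0_iff)
  qed
  thus ?thesis unfolding kernel_iff St0 by (rule ball_cong[OF refl])
qed

lemma null_space_condition_iff_kernel_subset:
  assumes A: "A \<in> carrier_mat n n" and As: "transpose_mat A = A"
    and S: "\<forall>i\<in>{1..r}. S i \<in> carrier_mat n (q i)"
  shows "(\<forall>R\<in>carrier_mat n n.
          (\<forall>i\<in>{1..r}. transpose_mat (S i) * A * R * A * S i = 0\<^sub>m (q i) (q i))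
          \<longrightarrow> A * R * A = 0\<^sub>m n n)
      \<longleftrightarrow> mat_kernel (stack_kron n S r * kron A A) \<subseteq> mat_kernel (kron A A)"
proof -
  have kernel_vectorize: "v \<in> carrier_vec (n * n)"
    if "v \<in> mat_kernel (stack_kron n S r * kron A A)" for v
    using that unfolding mat_kernel_def kron_def using A by auto
  show ?thesis
  proof (intro iffI subsetI ballI impI)
    fix v assume cond: "\<forall>R\<in>carrier_mat n n.
          (\<forall>i\<in>{1..r}. transpose_mat (S i) * A * R * A * S i = 0\<^sub>m (q i) (q i))
          \<longrightarrow> A * R * A = 0\<^sub>m n n"
      and v: "v \<in> mat_kernel (stack_kron n S r * kron A A)"
    obtain R where R: "R \<in> carrier_mat n n" "vectorize R = v"
      using vectorize_surj[OF kernel_vectorize[OF v]] .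
    have "\<forall>i\<in>{1..r}. transpose_mat (S i) * A * R * A * S i = 0\<^sub>m (q i) (q i)"
      using v unfolding R(2)[symmetric] vectorize_in_kernel_stack_kron_iff[OF A As R(1) S] .
    hence "vectorize R \<in> mat_kernel (kron A A)"
      unfolding vectorize_in_kernel_kron_iff[OF A As R(1)] using cond R(1) by blast
    thus "v \<in> mat_kernel (kron A A)" unfolding R(2) .
  next
    fix R assume sub: "mat_kernel (stack_kron n S r * kron A A) \<subseteq> mat_kernel (kron A A)"
      and R: "R \<in> carrier_mat n n"
      and zero: "\<forall>i\<in>{1..r}. transpose_mat (S i) * A * R * A * S i = 0\<^sub>m (q i) (q i)"
    have "vectorize R \<in> mat_kernel (stack_kron n S r * kron A A)"
      unfolding vectorize_in_kernel_stack_kron_iff[OF A As R S] by (rule zero)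
    thus "A * R * A = 0\<^sub>m n n" using sub unfolding vectorize_in_kernel_kron_iff[OF A As R, symmetric] by blast
  qed
qed

theorem lemma8:
  fixes n r :: nat and A :: "real mat" and S :: "nat \<Rightarrow> real mat"
    and q :: "nat \<Rightarrow> nat" and p :: "nat \<Rightarrow> real"
  assumes A_carrier: "A \<in> carrier_mat n n"
    and A_sym: "transpose_mat A = A"
    and A_nonzero: "A \<noteq> 0\<^sub>m n n"
    and S_carrier: "\<forall>i\<in>{1..r}. S i \<in> carrier_mat n (q i)"
    and p_pos: "\<forall>i\<in>{1..r}. p i > 0"
    and p_sum: "(\<Sum>i\<in>{1..r}. p i) = 1"
  shows
    "((\<forall>R\<in>carrier_mat n n.
          (\<forall>i\<in>{1..r}. transpose_mat (S i) * A * R * A * S i = 0\<^sub>m (q i) (q i))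
          \<longrightarrow> A * R * A = 0\<^sub>m n n)
      \<longrightarrow> rate n A S p r < 1 \<and>
          (\<forall>W\<in>carrier_mat n n. \<forall>k.
             expected_err A S p r W k \<le> rate n A S p r ^ k * frob_sq (A * W * A - pinv A)))
     \<and>
     ((\<forall>R\<in>carrier_mat n n.
          (\<forall>i\<in>{1..r}. transpose_mat (S i) * A * R * A * S i = 0\<^sub>m (q i) (q i))
          \<longrightarrow> A * R * A = 0\<^sub>m n n)
      \<longleftrightarrow> mat_kernel (stack_kron n S r * kron A A) \<subseteq> mat_kernel (kron A A))"
proof (intro conjI impI)
  interpret sketching n r A S q p
    using A_carrier A_sym S_carrier p_pos p_sum by unfold_locales
  assume cond: "\<forall>R\<in>carrier_mat n n.
          (\<forall>i\<in>{1..r}. transpose_mat (S i) * A * R * A * S i = 0\<^sub>m (q i) (q i))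
          \<longrightarrow> A * R * A = 0\<^sub>m n n"
  show "rate n A S p r < 1" using Inf_rate_set_pos[OF A_nonzero cond] rate_eq by simp
  show "\<forall>W\<in>carrier_mat n n. \<forall>k.
      expected_err A S p r W k \<le> rate n A S p r ^ k * frob_sq (A * W * A - pinv A)"
    using expected_err_le[OF _ Inf_rate_set_le_1[OF A_nonzero]] rate_eq by simp
next
  show "(\<forall>R\<in>carrier_mat n n.
          (\<forall>i\<in>{1..r}. transpose_mat (S i) * A * R * A * S i = 0\<^sub>m (q i) (q i))
          \<longrightarrow> A * R * A = 0\<^sub>m n n)
      \<longleftrightarrow> mat_kernel (stack_kron n S r * kron A A) \<subseteq> mat_kernel (kron A A)"
    by (rule null_space_condition_iff_kernel_subset[OF A_carrier A_sym S_carrier])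
qed

end
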